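(* Let $\varepsilon>0$, $F\in C^1(\mathbb{R})$ and $a\in C(]0,1[\times[0,\infty)\times\mathbb{R}^4)$, and consider for $t_0\ge0$ the problem $$-\varepsilon u_{xxt}+u_{tt}-u_{xx}=F(u)-a(x,t,u,u_x,u_{xx},u_t)\,u_t,\quad x\in(0,1),\ t>t_0,\qquad u(0,t)=u(1,t)=0,$$ with $u(x,t_0)=u_0(x)$, $u_t(x,t_0)=u_1(x)$, $u_0(0)=u_0(1)=u_1(0)=u_1(1)=0$. Assume: $F(0)=0$ and there is a constant $K>0$ with $F'(s)\le K<3\pi^2/4$ for all $s$; $\inf a>-\varepsilon\pi^2$; and there exists a nondecreasing map $A:[0,\infty)\to[0,\infty)$ such that $|a(x,t,\varphi,\varphi_x,\varphi_{xx},\psi)|\le A\big(d_1(\varphi,\psi)\big)$ for all $x,t$ and $(\varphi,\psi)\in\Gamma$. Then the null solution is exponential-asymptotically stable in the large.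
   Context: $\Gamma:=\{(\varphi,\psi):\varphi\in C^2([0,1]),\ \psi\in C([0,1]),\ \varphi(0)=\varphi(1)=\psi(0)=\psi(1)=0\}$, $d^2(\varphi,\psi):=\int_0^1(\varphi^2+\varphi_x^2+\varphi_{xx}^2+\psi^2)dx$, $d_1^2(\varphi,\psi):=\int_0^1(\varphi^2+\varphi_x^2+\psi^2)dx$. The null solution is exponential-asymptotically stable in the large if for every $\alpha>0$ there are constants $D(\alpha),C(\alpha)>0$ such that, for every $t_0\ge0$ and initial data with $d(u_0,u_1)\le\alpha$, the solution satisfies $d(u(\cdot,t),u_t(\cdot,t))\le D(\alpha)e^{-C(\alpha)(t-t_0)}d(u_0,u_1)$ for all $t\ge t_0$. *)

theory Defs
  imports "HOL-Analysis.Analysis"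
begin

definition C2_01 :: "(real \<Rightarrow> real) \<Rightarrow> bool" where
  "C2_01 \<phi> \<longleftrightarrow> (\<exists>\<phi>' \<phi>''.
      (\<forall>x\<in>{0..1}. (\<phi> has_real_derivative \<phi>' x) (at x within {0..1})) \<and>
      (\<forall>x\<in>{0..1}. (\<phi>' has_real_derivative \<phi>'' x) (at x within {0..1})) \<and>
      continuous_on {0..1} \<phi>'')"

definition Gamma :: "((real \<Rightarrow> real) \<times> (real \<Rightarrow> real)) set" where
  "Gamma = {(\<phi>, \<psi>). C2_01 \<phi> \<and> continuous_on {0..1} \<psi> \<and>
              \<phi> 0 = 0 \<and> \<phi> 1 = 0 \<and> \<psi> 0 = 0 \<and> \<psi> 1 = 0}"

definition dist_d :: "(real \<Rightarrow> real) \<Rightarrow> (real \<Rightarrow> real) \<Rightarrow> real" where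
  "dist_d \<phi> \<psi> = sqrt (integral {0..1}
      (\<lambda>x. (\<phi> x)\<^sup>2 + (deriv \<phi> x)\<^sup>2 + (deriv (deriv \<phi>) x)\<^sup>2 + (\<psi> x)\<^sup>2))"

definition dist_d1 :: "(real \<Rightarrow> real) \<Rightarrow> (real \<Rightarrow> real) \<Rightarrow> real" where
  "dist_d1 \<phi> \<psi> = sqrt (integral {0..1}
      (\<lambda>x. (\<phi> x)\<^sup>2 + (deriv \<phi> x)\<^sup>2 + (\<psi> x)\<^sup>2))"

definition is_solution ::
  "real \<Rightarrow> (real \<Rightarrow> real) \<Rightarrow> (real \<Rightarrow> real \<Rightarrow> real \<Rightarrow> real \<Rightarrow> real \<Rightarrow> real \<Rightarrow> real)
   \<Rightarrow> real \<Rightarrow> (real \<Rightarrow> real \<Rightarrow> real) \<Rightarrow> (real \<Rightarrow> real \<Rightarrow> real) \<Rightarrow> bool" where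
  "is_solution \<epsilon> F a t0 u v \<longleftrightarrow> (\<exists>ux uxx uxt uxxt utt.
     (\<forall>x\<in>{0..1}. \<forall>t\<in>{t0..}.
        ((\<lambda>y. u y t) has_real_derivative ux x t) (at x within {0..1}) \<and>
        ((\<lambda>y. ux y t) has_real_derivative uxx x t) (at x within {0..1}) \<and>
        ((\<lambda>s. u x s) has_real_derivative v x t) (at t within {t0..}) \<and>
        ((\<lambda>y. v y t) has_real_derivative uxt x t) (at x within {0..1}) \<and>
        ((\<lambda>y. uxt y t) has_real_derivative uxxt x t) (at x within {0..1}) \<and>
        ((\<lambda>s. v x s) has_real_derivative utt x t) (at t within {t0..})) \<and>
     continuous_on ({0..1} \<times> {t0..}) (\<lambda>(x,t). u x t) \<and>
     continuous_on ({0..1} \<times> {t0..}) (\<lambda>(x,t). ux x t) \<and>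
     continuous_on ({0..1} \<times> {t0..}) (\<lambda>(x,t). uxx x t) \<and>
     continuous_on ({0..1} \<times> {t0..}) (\<lambda>(x,t). v x t) \<and>
     continuous_on ({0..1} \<times> {t0..}) (\<lambda>(x,t). uxt x t) \<and>
     continuous_on ({0..1} \<times> {t0..}) (\<lambda>(x,t). uxxt x t) \<and>
     continuous_on ({0..1} \<times> {t0..}) (\<lambda>(x,t). utt x t) \<and>
     (\<forall>x\<in>{0<..<1}. \<forall>t\<in>{t0<..}.
        - \<epsilon> * uxxt x t + utt x t - uxx x t
          = F (u x t) - a x t (u x t) (ux x t) (uxx x t) (v x t) * v x t) \<and>
     (\<forall>t\<in>{t0..}. u 0 t = 0 \<and> u 1 t = 0))"

definition exp_stable_in_large ::
  "real \<Rightarrow> (real \<Rightarrow> real) \<Rightarrow> (real \<Rightarrow> real \<Rightarrow> real \<Rightarrow> real \<Rightarrow> real \<Rightarrow> real \<Rightarrow> real) \<Rightarrow> bool" where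
  "exp_stable_in_large \<epsilon> F a \<longleftrightarrow> (\<forall>\<alpha>>0. \<exists>D C. D > 0 \<and> C > 0 \<and>
     (\<forall>t0\<ge>0. \<forall>u0 u1 u v.
        (u0, u1) \<in> Gamma \<and> dist_d u0 u1 \<le> \<alpha> \<and> is_solution \<epsilon> F a t0 u v \<and>
        (\<forall>x\<in>{0..1}. u x t0 = u0 x \<and> v x t0 = u1 x) \<longrightarrow>
        (\<forall>t\<ge>t0. dist_d (\<lambda>x. u x t) (\<lambda>x. v x t) \<le> D * exp (- C * (t - t0)) * dist_d u0 u1)))"

end

(* Let \<mu> be a Poincare constant with max(K, -a0/\<epsilon>) < \<mu> < \<pi>\<^sup>2, where a0 = inf a. The energy
   E = \<parallel>u\<^sub>t\<parallel>\<^sup>2/2 + \<parallel>u\<^sub>x\<parallel>\<^sup>2/2 - \<integral> G(u), with G' = F, is nonincreasing since the damping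
   \<epsilon>\<parallel>u\<^sub>x\<^sub>t\<parallel>\<^sup>2 + \<integral> a u\<^sub>t\<^sup>2 is nonnegative by the Poincare inequality for u\<^sub>t, and it is coercive
   since F' \<le> K < \<mu>. This bounds d\<^sub>1(u, u\<^sub>t) for all times, hence bounds the coefficient a by A.
   Adding a small multiple of the virial \<integral> u u\<^sub>t + \<epsilon>\<parallel>u\<^sub>x\<parallel>\<^sup>2/2 to E gives a Lyapunov function that decays exponentially, and with it
   \<parallel>u\<^sub>x\<parallel>\<^sup>2 + \<parallel>u\<^sub>t\<parallel>\<^sup>2. Finally w = \<epsilon>u\<^sub>x\<^sub>x - u\<^sub>t satisfies w\<^sub>t = -w/\<epsilon> + (a - 1/\<epsilon>) u\<^sub>t - F(u), a linear
   equation with exponentially decaying forcing, so \<parallel>w\<parallel>\<^sup>2 and then \<parallel>u\<^sub>x\<^sub>x\<parallel>\<^sup>2 decay too. *)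

theory Submission
  imports Defs
begin

section \<open>Calculus on \<open>[0,1]\<close> and \<open>[t0,\<infinity>)\<close>\<close>

lemma continuous_on_section_left:
  assumes "continuous_on (X \<times> T) (\<lambda>(x, t). f x t)" "s \<in> T"
  shows "continuous_on X (\<lambda>x. f x s)"
proof -
  have "continuous_on X (\<lambda>x. (\<lambda>(x, t). f x t) (x, s))"
    by (rule continuous_on_compose2[OF assms(1)]) (use assms(2) in \<open>auto intro!: continuous_intros\<close>)
  then show ?thesis by simp
qed

lemma continuous_on_section_right:
  assumes "continuous_on (X \<times> T) (\<lambda>(x, t). f x t)" "x \<in> X"
  shows "continuous_on T (\<lambda>t. f x t)"
proof -
  have "continuous_on T (\<lambda>t. (\<lambda>(x, t). f x t) (x, t))"
    by (rule continuous_on_compose2[OF assms(1)]) (use assms(2) in \<open>auto intro!: continuous_intros\<close>)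
  then show ?thesis by simp
qed

lemma continuous_on_swap_args:
  assumes "continuous_on (X \<times> T) (\<lambda>(x, t). f x t)"
  shows "continuous_on (T \<times> X) (\<lambda>(t, x). f x t)"
proof -
  have "continuous_on (T \<times> X) (\<lambda>p. (\<lambda>(x, t). f x t) (snd p, fst p))"
    by (rule continuous_on_compose2[OF assms]) (auto intro!: continuous_intros)
  then show ?thesis by (simp add: split_beta)
qed

lemma has_real_derivative_integral_parameter:
  fixes f f' :: "real \<Rightarrow> real \<Rightarrow> real"
  assumes f': "\<And>x t. x \<in> {a..b} \<Longrightarrow> t \<in> T \<Longrightarrow> ((\<lambda>s. f x s) has_real_derivative f' x t) (at t within T)"
    and cont_f: "continuous_on ({a..b} \<times> T) (\<lambda>(x, t). f x t)"
    and cont_f': "continuous_on ({a..b} \<times> T) (\<lambda>(x, t). f' x t)"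
    and "convex T" "t \<in> T"
  shows "((\<lambda>s. integral {a..b} (\<lambda>x. f x s)) has_real_derivative integral {a..b} (\<lambda>x. f' x t))
           (at t within T)"
proof -
  have "((\<lambda>s. integral (cbox a b) (\<lambda>x. f x s)) has_field_derivative integral (cbox a b) (\<lambda>x. f' x t))
          (at t within T)"
  proof (rule leibniz_rule_field_derivative[where fx = "\<lambda>s x. f' x s"])
    show "(\<lambda>x. f x s) integrable_on cbox a b" if "s \<in> T" for s
      using continuous_on_section_left[OF cont_f that] by (simp add: integrable_continuous_real)
    show "continuous_on (T \<times> cbox a b) (\<lambda>(s, x). f' x s)"
      using continuous_on_swap_args[OF cont_f'] by simp
    show "((\<lambda>s. f x s) has_field_derivative f' x s) (at s within T)" if "s \<in> T" "x \<in> cbox a b" for s x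
      using f' that by simp
  qed (use assms in simp_all)
  then show ?thesis by simp
qed

lemma integral_eq_of_has_real_derivative_Ici:
  fixes f g :: "real \<Rightarrow> real"
  assumes "\<And>t. t \<ge> t0 \<Longrightarrow> (f has_real_derivative g t) (at t within {t0..})" "s \<ge> t0"
  shows "f s = f t0 + integral {t0..s} g"
proof -
  have "(g has_integral (f s - f t0)) {t0..s}"
  proof (rule fundamental_theorem_of_calculus[OF assms(2)])
    fix x assume "x \<in> {t0..s}"
    then have "(f has_real_derivative g x) (at x within {t0..s})"
      using DERIV_subset[OF assms(1)[of x], of "{t0..s}"] by auto
    then show "(f has_vector_derivative g x) (at x within {t0..s})"
      by (simp add: has_real_derivative_iff_has_vector_derivative)
  qed
  then show ?thesis by (simp add: integral_unique)
qed

lemma has_real_derivative_integral_upper_Ici: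
  fixes g :: "real \<Rightarrow> real"
  assumes "continuous_on {t0..} g" "t \<ge> t0"
  shows "((\<lambda>s. integral {t0..s} g) has_real_derivative g t) (at t within {t0..})"
proof -
  have "continuous_on {t0..t+1} g"
    using assms(1) by (rule continuous_on_subset) auto
  from integral_has_real_derivative[OF this, of t] assms(2)
  have "((\<lambda>s. integral {t0..s} g) has_real_derivative g t) (at t within {t0..t+1})" by simp
  moreover have "at t within {t0..t+1} = at t within {t0..}"
    by (rule at_within_nhd[where S = "{..<t+1}"]) auto
  ultimately show ?thesis by simp
qed

lemma at_within_Icc_nontrivial: "x \<in> {a..b} \<Longrightarrow> a < (b::real) \<Longrightarrow> at x within {a..b} \<noteq> bot"
  using trivial_limit_within[of x "{a..b}"] by (simp add: trivial_limit_def)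

lemma at_within_Ici_nontrivial: "x \<ge> (a::real) \<Longrightarrow> at x within {a..} \<noteq> bot"
proof -
  assume "x \<ge> a"
  then have "x islimpt {a..x+1}" by simp
  then have "x islimpt {a..}" by (rule islimpt_subset) auto
  then show ?thesis using trivial_limit_within[of x "{a..}"] by (simp add: trivial_limit_def)
qed

text \<open>\<open>h = f\<^sub>x\<close> is recovered from \<open>f(x, t) = f(x, t0) + \<integral>\<^sub>t\<^sub>0\<^sup>t f\<^sub>t(x, \<tau>) d\<tau>\<close> by differentiating
  under the integral.\<close>

lemma has_real_derivative_mixed_partial:
  fixes f g h k :: "real \<Rightarrow> real \<Rightarrow> real"
  assumes f_t: "\<And>x t. x \<in> {0..1} \<Longrightarrow> t \<ge> t0 \<Longrightarrow> ((\<lambda>s. f x s) has_real_derivative g x t) (at t within {t0..})"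
    and f_x: "\<And>x t. x \<in> {0..1} \<Longrightarrow> t \<ge> t0 \<Longrightarrow> ((\<lambda>y. f y t) has_real_derivative h x t) (at x within {0..1})"
    and g_x: "\<And>x t. x \<in> {0..1} \<Longrightarrow> t \<ge> t0 \<Longrightarrow> ((\<lambda>y. g y t) has_real_derivative k x t) (at x within {0..1})"
    and cont_g: "continuous_on ({0..1} \<times> {t0..}) (\<lambda>(x, t). g x t)"
    and cont_k: "continuous_on ({0..1} \<times> {t0..}) (\<lambda>(x, t). k x t)"
    and x: "x \<in> {0..1}" and t: "t \<ge> t0"
  shows "((\<lambda>s. h x s) has_real_derivative k x t) (at t within {t0..})"
proof -
  have h_eq: "h y s = h y t0 + integral {t0..s} (\<lambda>\<tau>. k y \<tau>)" if y: "y \<in> {0..1}" and s: "s \<ge> t0" for y s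
  proof -
    have "((\<lambda>z. integral {t0..s} (\<lambda>\<tau>. g z \<tau>)) has_real_derivative integral {t0..s} (\<lambda>\<tau>. k y \<tau>))
            (at y within {0..1})"
    proof (rule has_real_derivative_integral_parameter[where f = "\<lambda>\<tau> z. g z \<tau>" and f' = "\<lambda>\<tau> z. k z \<tau>"])
      show "((\<lambda>z. g z \<tau>) has_real_derivative k z \<tau>) (at z within {0..1})"
        if "\<tau> \<in> {t0..s}" "z \<in> {0..1}" for \<tau> z
        using g_x that by simp
      show "continuous_on ({t0..s} \<times> {0..1}) (\<lambda>(\<tau>, z). g z \<tau>)"
        using continuous_on_swap_args[OF cont_g] by (rule continuous_on_subset) auto
      show "continuous_on ({t0..s} \<times> {0..1}) (\<lambda>(\<tau>, z). k z \<tau>)"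
        using continuous_on_swap_args[OF cont_k] by (rule continuous_on_subset) auto
    qed (use y in auto)
    from DERIV_add[OF f_x[OF y order_refl] this]
    have "((\<lambda>z. f z s) has_real_derivative h y t0 + integral {t0..s} (\<lambda>\<tau>. k y \<tau>)) (at y within {0..1})"
    proof (rule has_field_derivative_transform_within[OF _ zero_less_one y])
      show "f z t0 + integral {t0..s} (\<lambda>\<tau>. g z \<tau>) = f z s" if "z \<in> {0..1}" for z
        using integral_eq_of_has_real_derivative_Ici[of t0 "\<lambda>s. f z s" "\<lambda>s. g z s", OF f_t[OF that] s]
        by simp
    qed
    then show ?thesis
      using has_field_derivative_unique[OF f_x[OF y s] _ at_within_Icc_nontrivial[OF y]] by simp
  qed
  have "((\<lambda>s. h x t0 + integral {t0..s} (\<lambda>\<tau>. k x \<tau>)) has_real_derivative k x t) (at t within {t0..})"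
    using has_real_derivative_integral_upper_Ici[OF continuous_on_section_right[OF cont_k x] t]
    by (intro derivative_eq_intros) auto
  then show ?thesis
  proof (rule has_field_derivative_transform_within[OF _ zero_less_one])
    show "h x t0 + integral {t0..s} (\<lambda>\<tau>. k x \<tau>) = h x s" if "s \<in> {t0..}" for s
      using h_eq[OF x, of s] that by simp
  qed (use t in auto)
qed

lemma has_real_derivative_at_of_within_Ici:
  fixes f :: "real \<Rightarrow> real"
  assumes "(f has_real_derivative D) (at t within {t0..})" "t0 < t"
  shows "(f has_real_derivative D) (at t)"
proof -
  have "at t within {t0..} = at t"
    by (rule at_within_interior) (use assms(2) in auto)
  then show ?thesis using assms(1) by simp
qed

lemma integral_le_of_le_on_interior:
  fixes f g :: "real \<Rightarrow> real"
  assumes "a < b" "continuous_on {a..b} f" "continuous_on {a..b} g"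
    and le: "\<And>x. x \<in> {a<..<b} \<Longrightarrow> f x \<le> g x"
  shows "integral {a..b} f \<le> integral {a..b} g"
proof (rule integral_le)
  show "f x \<le> g x" if "x \<in> {a..b}" for x
  proof -
    have "0 \<le> (\<lambda>x. g x - f x) x"
    proof (rule continuous_ge_on_closure[where S = "{a<..<b}" and f = "\<lambda>x. g x - f x" and a = 0])
      show "continuous_on (closure {a<..<b}) (\<lambda>x. g x - f x)"
        using assms by (auto intro!: continuous_intros)
    qed (use assms that le in \<open>auto simp: algebra_simps\<close>)
    then show ?thesis by simp
  qed
qed (use assms in \<open>auto intro: integrable_continuous_real\<close>)

lemma abs_integral_le_of_le_on_interior:
  fixes f g :: "real \<Rightarrow> real"
  assumes "a < b" "continuous_on {a..b} f" "continuous_on {a..b} g"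
    and le: "\<And>x. x \<in> {a<..<b} \<Longrightarrow> \<bar>f x\<bar> \<le> g x"
  shows "\<bar>integral {a..b} f\<bar> \<le> integral {a..b} g"
proof -
  have "integral {a..b} f \<le> integral {a..b} g"
    using le by (intro integral_le_of_le_on_interior assms) (auto simp: abs_le_iff)
  moreover have "integral {a..b} (\<lambda>x. - f x) \<le> integral {a..b} g"
    using le by (intro integral_le_of_le_on_interior assms continuous_intros) (auto simp: abs_le_iff)
  ultimately show ?thesis by (simp add: abs_le_iff)
qed

lemma integration_by_parts_vanishing:
  fixes f g f' g' :: "real \<Rightarrow> real"
  assumes "a \<le> b"
    and f': "\<And>x. x \<in> {a..b} \<Longrightarrow> (f has_real_derivative f' x) (at x within {a..b})"
    and g': "\<And>x. x \<in> {a..b} \<Longrightarrow> (g has_real_derivative g' x) (at x within {a..b})"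
    and "continuous_on {a..b} f'" "continuous_on {a..b} g'"
    and "f a * g a = 0" "f b * g b = 0"
  shows "integral {a..b} (\<lambda>x. f' x * g x) = - integral {a..b} (\<lambda>x. f x * g' x)"
proof -
  have "continuous_on {a..b} f" "continuous_on {a..b} g"
    using DERIV_continuous_on[OF f'] DERIV_continuous_on[OF g'] by auto
  then have int: "(\<lambda>x. f' x * g x) integrable_on {a..b}" "(\<lambda>x. f x * g' x) integrable_on {a..b}"
    using assms by (auto intro!: integrable_continuous_real continuous_intros)
  have "((\<lambda>x. f' x * g x + f x * g' x) has_integral (f b * g b - f a * g a)) {a..b}"
  proof (rule fundamental_theorem_of_calculus[OF \<open>a \<le> b\<close>])
    fix x assume "x \<in> {a..b}"
    from DERIV_mult[OF f'[OF this] g'[OF this]]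
    show "((\<lambda>x. f x * g x) has_vector_derivative f' x * g x + f x * g' x) (at x within {a..b})"
      by (simp add: has_real_derivative_iff_has_vector_derivative mult.commute)
  qed
  then have "integral {a..b} (\<lambda>x. f' x * g x + f x * g' x) = 0"
    using assms by (simp add: integral_unique)
  then show ?thesis
    using integral_add[OF int] by simp
qed

text \<open>Complete the square with \<open>\<phi>(x) = -c tan(c (x - 1/2))\<close>, which solves the Riccati equation
  \<open>\<phi>' = -c\<^sup>2 - \<phi>\<^sup>2\<close> on all of \<open>[0,1]\<close> because \<open>c/2 < \<pi>/2\<close>.\<close>

lemma poincare_inequality_01:
  fixes f f' :: "real \<Rightarrow> real"
  assumes f': "\<And>x. x \<in> {0..1} \<Longrightarrow> (f has_real_derivative f' x) (at x within {0..1})"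
    and cont_f': "continuous_on {0..1} f'" and "f 0 = 0" "f 1 = 0"
    and c: "0 < c" "c < pi"
  shows "c\<^sup>2 * integral {0..1} (\<lambda>x. (f x)\<^sup>2) \<le> integral {0..1} (\<lambda>x. (f' x)\<^sup>2)"
proof -
  have cont_f: "continuous_on {0..1} f"
    using f' by (rule DERIV_continuous_on)
  define \<phi> where "\<phi> x = - c * tan (c * (x - 1/2))" for x
  have cos_pos: "cos (c * (x - 1/2)) > 0" if "x \<in> {0..1}" for x
  proof -
    have "\<bar>x - 1/2\<bar> \<le> 1/2"
      using that unfolding abs_le_iff by auto
    then have "\<bar>c * (x - 1/2)\<bar> \<le> c * (1/2)"
      using c by (simp add: abs_mult mult_left_mono)
    then show ?thesis using c by (intro cos_gt_zero_pi) auto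
  qed
  have \<phi>': "(\<phi> has_real_derivative - c\<^sup>2 - (\<phi> x)\<^sup>2) (at x within {0..1})" if "x \<in> {0..1}" for x
  proof -
    let ?z = "c * (x - 1/2)"
    have "(\<phi> has_real_derivative - c * (inverse ((cos ?z)\<^sup>2) * c)) (at x within {0..1})"
      unfolding \<phi>_def using cos_pos[OF that]
      by (auto intro!: derivative_eq_intros DERIV_chain2[OF DERIV_tan])
    moreover have "inverse ((cos ?z)\<^sup>2) = 1 + (tan ?z)\<^sup>2"
      using cos_pos[OF that] sin_cos_squared_add[of ?z]
      by (simp add: tan_def field_simps power2_eq_square)
    ultimately show ?thesis by (simp add: \<phi>_def power2_eq_square algebra_simps)
  qed
  have cont_\<phi>: "continuous_on {0..1} \<phi>"
    using \<phi>' by (rule DERIV_continuous_on)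
  define h' where "h' x = (- c\<^sup>2 - (\<phi> x)\<^sup>2) * (f x)\<^sup>2 + \<phi> x * (2 * f x * f' x)" for x
  have "(h' has_integral (\<phi> 1 * (f 1)\<^sup>2 - \<phi> 0 * (f 0)\<^sup>2)) {0..1}"
  proof (rule fundamental_theorem_of_calculus)
    fix x :: real assume x: "x \<in> {0..1}"
    have "((\<lambda>x. (f x)\<^sup>2) has_real_derivative 2 * f x * f' x) (at x within {0..1})"
      using DERIV_mult[OF f'[OF x] f'[OF x]] by (simp add: power2_eq_square algebra_simps)
    from DERIV_mult[OF \<phi>'[OF x] this]
    show "((\<lambda>x. \<phi> x * (f x)\<^sup>2) has_vector_derivative h' x) (at x within {0..1})"
      by (simp add: h'_def has_real_derivative_iff_has_vector_derivative algebra_simps)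
  qed simp
  then have "integral {0..1} h' = 0"
    using assms by (simp add: integral_unique)
  moreover have "(f' x)\<^sup>2 - c\<^sup>2 * (f x)\<^sup>2 = (f' x - \<phi> x * f x)\<^sup>2 + h' x" for x
    by (simp add: h'_def power2_eq_square algebra_simps)
  then have "integral {0..1} (\<lambda>x. (f' x)\<^sup>2 - c\<^sup>2 * (f x)\<^sup>2)
      = integral {0..1} (\<lambda>x. (f' x - \<phi> x * f x)\<^sup>2) + integral {0..1} h'"
    using cont_f cont_f' cont_\<phi> unfolding h'_def
    by (simp only:) (auto intro!: integral_add integrable_continuous_real continuous_intros)
  moreover have "integral {0..1} (\<lambda>x. (f' x)\<^sup>2 - c\<^sup>2 * (f x)\<^sup>2)
      = integral {0..1} (\<lambda>x. (f' x)\<^sup>2) - c\<^sup>2 * integral {0..1} (\<lambda>x. (f x)\<^sup>2)"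
    using cont_f cont_f'
    by (subst integral_diff) (auto intro!: integrable_continuous_real continuous_intros)
  moreover have "integral {0..1} (\<lambda>x. (f' x - \<phi> x * f x)\<^sup>2) \<ge> 0"
    using cont_f cont_f' cont_\<phi>
    by (intro integral_nonneg integrable_continuous_real continuous_intros) auto
  ultimately show ?thesis by linarith
qed

lemma sq_le_integral_sq_add_sq_deriv:
  fixes f f' :: "real \<Rightarrow> real"
  assumes f': "\<And>x. x \<in> {0..1} \<Longrightarrow> (f has_real_derivative f' x) (at x within {0..1})"
    and cont_f': "continuous_on {0..1} f'" and "f 0 = 0" and x: "x \<in> {0..1}"
  shows "(f x)\<^sup>2 \<le> integral {0..1} (\<lambda>y. (f y)\<^sup>2 + (f' y)\<^sup>2)"
proof -
  have cont_f: "continuous_on {0..1} f"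
    using f' by (rule DERIV_continuous_on)
  have int: "(\<lambda>y. (f y)\<^sup>2 + (f' y)\<^sup>2) integrable_on {0..s}" "(\<lambda>y. 2 * f y * f' y) integrable_on {0..s}"
    if "s \<le> 1" for s
    using continuous_on_subset[OF cont_f, of "{0..s}"] continuous_on_subset[OF cont_f', of "{0..s}"] that
    by (auto intro!: integrable_continuous_real continuous_intros)
  have "((\<lambda>y. 2 * f y * f' y) has_integral ((f x)\<^sup>2 - (f 0)\<^sup>2)) {0..x}"
  proof (rule fundamental_theorem_of_calculus)
    fix y assume y: "y \<in> {0..x}"
    have "((\<lambda>x. (f x)\<^sup>2) has_real_derivative 2 * f y * f' y) (at y within {0..1})"
      using DERIV_mult[OF f'[of y] f'[of y]] y x by (simp add: power2_eq_square algebra_simps)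
    then have "((\<lambda>x. (f x)\<^sup>2) has_real_derivative 2 * f y * f' y) (at y within {0..x})"
      by (rule DERIV_subset) (use x in auto)
    then show "((\<lambda>y. (f y)\<^sup>2) has_vector_derivative 2 * f y * f' y) (at y within {0..x})"
      by (simp add: has_real_derivative_iff_has_vector_derivative)
  qed (use x in auto)
  then have "(f x)\<^sup>2 = integral {0..x} (\<lambda>y. 2 * f y * f' y)"
    using assms by (simp add: integral_unique)
  also have "\<dots> \<le> integral {0..x} (\<lambda>y. (f y)\<^sup>2 + (f' y)\<^sup>2)"
    using int x sum_squares_bound by (intro integral_le) auto
  also have "\<dots> \<le> integral {0..1} (\<lambda>y. (f y)\<^sup>2 + (f' y)\<^sup>2)"
    using int x by (intro integral_subset_le) auto
  finally show ?thesis .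
qed

lemma abs_mult_le_young:
  fixes a b \<eta> :: real
  assumes "0 < \<eta>"
  shows "\<bar>a * b\<bar> \<le> \<eta> * a\<^sup>2 / 2 + b\<^sup>2 / (2 * \<eta>)"
proof -
  have "0 \<le> (\<eta> * \<bar>a\<bar> - \<bar>b\<bar>)\<^sup>2 / (2 * \<eta>)"
    using assms by simp
  also have "\<dots> = \<eta> * a\<^sup>2 / 2 + b\<^sup>2 / (2 * \<eta>) - \<bar>a * b\<bar>"
    using assms by (simp add: power2_eq_square field_simps abs_mult)
  finally show ?thesis by simp
qed

lemma sq_add_le: "((a::real) + b)\<^sup>2 \<le> 2 * (a\<^sup>2 + b\<^sup>2)"
  using sum_squares_bound[of a b] by (simp add: power2_eq_square algebra_simps)

lemma sq_add3_le: "((a::real) + b + c)\<^sup>2 \<le> 3 * (a\<^sup>2 + b\<^sup>2 + c\<^sup>2)"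
  using sum_squares_bound[of a b] sum_squares_bound[of b c] sum_squares_bound[of a c]
  by (simp add: power2_eq_square algebra_simps)

lemma has_derivative_sq_integral:
  fixes f f' :: "real \<Rightarrow> real \<Rightarrow> real"
  assumes "\<And>x t. x \<in> {0..1} \<Longrightarrow> t \<ge> t0 \<Longrightarrow> ((\<lambda>s. f x s) has_real_derivative f' x t) (at t within {t0..})"
    and "continuous_on ({0..1} \<times> {t0..}) (\<lambda>p. f (fst p) (snd p))"
    and "continuous_on ({0..1} \<times> {t0..}) (\<lambda>p. f' (fst p) (snd p))"
    and "t \<ge> t0"
  shows "((\<lambda>s. integral {0..1} (\<lambda>x. (f x s)\<^sup>2)) has_real_derivative integral {0..1} (\<lambda>x. 2 * f x t * f' x t))
           (at t within {t0..})"
proof (rule has_real_derivative_integral_parameter[where f' = "\<lambda>x s. 2 * f x s * f' x s"])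
  show "((\<lambda>s. (f x s)\<^sup>2) has_real_derivative 2 * f x s * f' x s) (at s within {t0..})"
    if "x \<in> {0..1}" "s \<in> {t0..}" for x s
    using DERIV_mult[OF assms(1)[of x s] assms(1)[of x s]] that by (simp add: power2_eq_square algebra_simps)
qed (use assms in \<open>auto intro!: continuous_intros simp: case_prod_unfold\<close>)

lemma deriv_cong_open:
  fixes f g :: "real \<Rightarrow> real"
  assumes "open S" "x \<in> S" "\<And>y. y \<in> S \<Longrightarrow> f y = g y"
  shows "deriv f x = deriv g x"
proof -
  have "(f has_real_derivative D) (at x) \<longleftrightarrow> (g has_real_derivative D) (at x)" for D
    using has_field_derivative_transform_within_open[OF _ assms(1,2)] assms(3) by metis
  then show ?thesis
    unfolding deriv_def by simp
qed

lemma dist_d_cong: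
  assumes "\<And>x. x \<in> {0..1} \<Longrightarrow> \<phi> x = \<phi>' x" "\<And>x. x \<in> {0..1} \<Longrightarrow> \<psi> x = \<psi>' x"
  shows "dist_d \<phi> \<psi> = dist_d \<phi>' \<psi>'"
proof -
  have d1: "deriv \<phi> x = deriv \<phi>' x" if "x \<in> {0<..<1}" for x
    by (rule deriv_cong_open[where S = "{0<..<1}"]) (use that assms in auto)
  have "deriv (deriv \<phi>) x = deriv (deriv \<phi>') x" if "x \<in> {0<..<1}" for x
    by (rule deriv_cong_open[where S = "{0<..<1}"]) (use that d1 in auto)
  then have "integral {0..1} (\<lambda>x. (\<phi> x)\<^sup>2 + (deriv \<phi> x)\<^sup>2 + (deriv (deriv \<phi>) x)\<^sup>2 + (\<psi> x)\<^sup>2)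
      = integral {0..1} (\<lambda>x. (\<phi>' x)\<^sup>2 + (deriv \<phi>' x)\<^sup>2 + (deriv (deriv \<phi>') x)\<^sup>2 + (\<psi>' x)\<^sup>2)"
    using assms d1 by (intro integral_spike[where S = "{0, 1}"]) auto
  then show ?thesis
    by (simp add: dist_d_def)
qed

section \<open>The nonlinearity\<close>

definition primitive :: "(real \<Rightarrow> real) \<Rightarrow> real \<Rightarrow> real" where
  "primitive F s = (LBINT y=0..s. F y)"

lemma primitive_zero [simp]: "primitive F 0 = 0"
  by (simp add: primitive_def zero_ereal_def)

lemma has_real_derivative_primitive:
  assumes "continuous_on UNIV F"
  shows "(primitive F has_real_derivative F s) (at s)"
proof -
  let ?I = "{min 0 (s - 1)..max 0 (s + 1)}"
  have "at s within ?I = at s"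
    by (intro at_within_interior) auto
  moreover have "continuous_on ?I F"
    using assms by (rule continuous_on_subset) auto
  ultimately show ?thesis
    using interval_integral_FTC2[of "min 0 (s - 1)" 0 "max 0 (s + 1)" F s]
    by (auto simp: primitive_def[abs_def] zero_ereal_def has_real_derivative_iff_has_vector_derivative)
qed

lemma mean_value_from_zero:
  fixes f f' :: "real \<Rightarrow> real"
  assumes "\<And>x. (f has_real_derivative f' x) (at x)"
  obtains z where "\<bar>z\<bar> \<le> \<bar>s\<bar>" "f s - f 0 = s * f' z"
proof (cases "s = 0")
  case True
  then show ?thesis using that[of 0] by simp
next
  case False
  consider "0 < s" | "s < 0" using False by linarith
  then show ?thesis
  proof cases
    case 1
    with MVT2[of 0 s f f'] assms obtain z where "0 < z" "z < s" "f s - f 0 = s * f' z"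
      by auto
    then show ?thesis using that[of z] by auto
  next
    case 2
    with MVT2[of s 0 f f'] assms obtain z where "s < z" "z < 0" "f 0 - f s = (0 - s) * f' z"
      by auto
    then show ?thesis using that[of z] by auto
  qed
qed

locale nonlinearity =
  fixes F F' :: "real \<Rightarrow> real" and K :: real
  assumes has_derivative_F: "\<And>s. (F has_real_derivative F' s) (at s)"
    and continuous_F': "continuous_on UNIV F'"
    and F_zero: "F 0 = 0"
    and F'_le: "\<And>s. F' s \<le> K"
begin

lemma continuous_F: "continuous_on UNIV F"
  using has_derivative_F by (intro has_real_derivative_imp_continuous_on)

lemma has_derivative_primitive: "(primitive F has_real_derivative F s) (at s)"
  by (rule has_real_derivative_primitive[OF continuous_F])

lemma continuous_primitive: "continuous_on UNIV (primitive F)"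
  using has_derivative_primitive by (intro has_real_derivative_imp_continuous_on)

lemma F_le: "s \<ge> 0 \<Longrightarrow> F s \<le> K * s"
  using mean_value_from_zero[OF has_derivative_F, of s] F'_le F_zero
  by (metis diff_zero mult.commute mult_left_mono)

lemma F_ge: "s \<le> 0 \<Longrightarrow> K * s \<le> F s"
  using mean_value_from_zero[OF has_derivative_F, of s] F'_le F_zero
  by (metis diff_zero mult.commute mult_left_mono_neg)

lemma mult_F_le: "s * F s \<le> K * s\<^sup>2"
  using F_le[of s] F_ge[of s] mult_left_mono[of "F s" "K * s" s] mult_left_mono_neg[of "K * s" "F s" s]
  by (cases "s \<ge> 0") (auto simp: power2_eq_square algebra_simps)

text \<open>\<open>s \<mapsto> K s\<^sup>2/2 - primitive F s\<close> has derivative \<open>K s - F s\<close>, which has the sign of \<open>s\<close>.\<close>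

lemma primitive_le: "primitive F s \<le> K * s\<^sup>2 / 2"
proof -
  define h where "h s = K * s\<^sup>2 / 2 - primitive F s" for s
  have h': "(h has_real_derivative K * x - F x) (at x)" for x
    unfolding h_def by (rule derivative_eq_intros has_derivative_primitive refl | simp)+
  have "h 0 \<le> h s" if "0 \<le> s"
    using that h' F_le by (intro DERIV_nonneg_imp_nondecreasing[OF that]) (auto intro!: exI)
  moreover have "h 0 \<le> h s" if "s \<le> 0"
    using that h' F_ge by (intro DERIV_nonpos_imp_nonincreasing[OF that]) (auto intro!: exI)
  ultimately show ?thesis
    by (cases "s \<ge> 0") (auto simp: h_def)
qed

definition deriv_bound :: "real \<Rightarrow> real" where
  "deriv_bound r = (SUP z\<in>{-\<bar>r\<bar>..\<bar>r\<bar>}. \<bar>F' z\<bar>)"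

lemma abs_F'_le_deriv_bound:
  assumes "\<bar>z\<bar> \<le> r"
  shows "\<bar>F' z\<bar> \<le> deriv_bound r"
proof -
  have "compact ((\<lambda>z. \<bar>F' z\<bar>) ` {-\<bar>r\<bar>..\<bar>r\<bar>})"
    using continuous_F' by (intro compact_continuous_image) (auto intro!: continuous_intros
        intro: continuous_on_subset)
  then have "bdd_above ((\<lambda>z. \<bar>F' z\<bar>) ` {-\<bar>r\<bar>..\<bar>r\<bar>})"
    by (rule bounded_imp_bdd_above[OF compact_imp_bounded])
  then show ?thesis
    unfolding deriv_bound_def using assms by (intro cSUP_upper) auto
qed

lemma deriv_bound_nonneg: "0 \<le> deriv_bound r"
  using abs_F'_le_deriv_bound[of 0 "\<bar>r\<bar>"] unfolding deriv_bound_def by simp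

lemma abs_F_le:
  assumes "\<bar>s\<bar> \<le> r"
  shows "\<bar>F s\<bar> \<le> deriv_bound r * \<bar>s\<bar>"
proof -
  obtain z where "\<bar>z\<bar> \<le> \<bar>s\<bar>" "F s - F 0 = s * F' z"
    using mean_value_from_zero[OF has_derivative_F] .
  then show ?thesis
    using abs_F'_le_deriv_bound[of z r] assms F_zero
    by (simp add: abs_mult mult.commute mult_left_mono)
qed

lemma abs_primitive_le:
  assumes "\<bar>s\<bar> \<le> r"
  shows "\<bar>primitive F s\<bar> \<le> deriv_bound r * s\<^sup>2"
proof -
  obtain z where z: "\<bar>z\<bar> \<le> \<bar>s\<bar>" "primitive F s - primitive F 0 = s * F z"
    using mean_value_from_zero[OF has_derivative_primitive] .
  then have "\<bar>primitive F s\<bar> = \<bar>s\<bar> * \<bar>F z\<bar>"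
    by (simp add: abs_mult)
  also have "\<dots> \<le> \<bar>s\<bar> * (deriv_bound r * \<bar>s\<bar>)"
    using abs_F_le[of z r] z assms deriv_bound_nonneg
    by (intro mult_left_mono) (auto intro: order_trans mult_left_mono)
  finally show ?thesis
    by (simp add: power2_eq_square algebra_simps)
qed

end

section \<open>Differential inequalities\<close>

lemma exp_decay_of_deriv_le:
  fixes y :: "real \<Rightarrow> real"
  assumes cont: "continuous_on {t0..} y"
    and deriv: "\<And>t. t > t0 \<Longrightarrow> \<exists>d. (y has_real_derivative d) (at t) \<and> d \<le> - \<gamma> * y t"
    and "t \<ge> t0"
  shows "y t \<le> exp (- \<gamma> * (t - t0)) * y t0"
proof -
  define z where "z s = exp (\<gamma> * (s - t0)) * y s" for s
  have "z t \<le> z t0"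
  proof (rule DERIV_nonpos_imp_decreasing_open[OF \<open>t \<ge> t0\<close>])
    fix s assume s: "t0 < s" "s < t"
    then obtain d where d: "(y has_real_derivative d) (at s)" "d \<le> - \<gamma> * y s"
      using deriv by blast
    have "(z has_real_derivative exp (\<gamma> * (s - t0)) * (\<gamma> * y s + d)) (at s)"
      unfolding z_def by (rule derivative_eq_intros d refl | simp add: algebra_simps)+
    moreover have "exp (\<gamma> * (s - t0)) * (\<gamma> * y s + d) \<le> 0"
      using d(2) by (intro mult_nonneg_nonpos) auto
    ultimately show "\<exists>d. (z has_real_derivative d) (at s) \<and> d \<le> 0"
      by blast
  next
    show "continuous_on {t0..t} z"
      unfolding z_def using cont by (auto intro!: continuous_intros intro: continuous_on_subset)
  qed
  then have "exp (- \<gamma> * (t - t0)) * (exp (\<gamma> * (t - t0)) * y t) \<le> exp (- \<gamma> * (t - t0)) * y t0"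
    by (intro mult_left_mono) (auto simp: z_def)
  then show ?thesis
    by (simp add: mult.assoc[symmetric] mult_exp_exp)
qed

text \<open>The forcing term is absorbed into the decreasing function
  \<open>e\<^sup>\<beta>\<^sup>(\<^sup>t\<^sup>-\<^sup>t\<^sup>0\<^sup>) W(t) + C/(\<gamma> - \<beta>) e\<^sup>-\<^sup>(\<^sup>\<gamma>\<^sup>-\<^sup>\<beta>\<^sup>)\<^sup>(\<^sup>t\<^sup>-\<^sup>t\<^sup>0\<^sup>)\<close>.\<close>

lemma forced_decay_bound:
  fixes W :: "real \<Rightarrow> real"
  assumes cont: "continuous_on {t0..} W"
    and deriv: "\<And>t. t > t0 \<Longrightarrow>
      \<exists>d. (W has_real_derivative d) (at t) \<and> d \<le> - \<nu> * W t + C * exp (- \<gamma> * (t - t0))"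
    and W_nonneg: "\<And>t. t \<ge> t0 \<Longrightarrow> 0 \<le> W t"
    and "\<beta> \<le> \<nu>" "\<beta> < \<gamma>" "0 \<le> C" "t \<ge> t0"
  shows "exp (\<beta> * (t - t0)) * W t \<le> W t0 + C / (\<gamma> - \<beta>)"
proof -
  define z where "z s = exp (\<beta> * (s - t0)) * W s + C / (\<gamma> - \<beta>) * exp (- (\<gamma> - \<beta>) * (s - t0))" for s
  have "z t \<le> z t0"
  proof (rule DERIV_nonpos_imp_decreasing_open[OF \<open>t \<ge> t0\<close>])
    fix s assume s: "t0 < s" "s < t"
    then obtain d where d: "(W has_real_derivative d) (at s)"
        "d \<le> - \<nu> * W s + C * exp (- \<gamma> * (s - t0))"
      using deriv by blast
    have "(z has_real_derivative exp (\<beta> * (s - t0)) * \<beta> * W s + exp (\<beta> * (s - t0)) * d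
        + C / (\<gamma> - \<beta>) * (exp (- (\<gamma> - \<beta>) * (s - t0)) * - (\<gamma> - \<beta>))) (at s)"
      unfolding z_def using d(1) by (intro derivative_eq_intros refl | simp)+
    moreover have "exp (\<beta> * (s - t0)) * \<beta> * W s + exp (\<beta> * (s - t0)) * d
        + C / (\<gamma> - \<beta>) * (exp (- (\<gamma> - \<beta>) * (s - t0)) * - (\<gamma> - \<beta>)) \<le> 0"
    proof -
      have "\<beta> * W s + d \<le> C * exp (- \<gamma> * (s - t0))"
        using d(2) mult_right_mono[OF \<open>\<beta> \<le> \<nu>\<close> W_nonneg[of s]] s by simp
      then have "exp (\<beta> * (s - t0)) * (\<beta> * W s + d) \<le> exp (\<beta> * (s - t0)) * (C * exp (- \<gamma> * (s - t0)))"
        by (intro mult_left_mono) auto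
      moreover have "exp (\<beta> * (s - t0)) * (C * exp (- \<gamma> * (s - t0))) = C * exp (- (\<gamma> - \<beta>) * (s - t0))"
        by (simp add: mult_exp_exp algebra_simps)
      moreover have "C / (\<gamma> - \<beta>) * (exp (- (\<gamma> - \<beta>) * (s - t0)) * - (\<gamma> - \<beta>))
          = - (C * exp (- (\<gamma> - \<beta>) * (s - t0)))"
        using \<open>\<beta> < \<gamma>\<close> by (simp add: field_simps)
      moreover have "exp (\<beta> * (s - t0)) * \<beta> * W s + exp (\<beta> * (s - t0)) * d
          = exp (\<beta> * (s - t0)) * (\<beta> * W s + d)"
        by (simp add: algebra_simps)
      ultimately show ?thesis
        by linarith
    qed
    ultimately show "\<exists>d. (z has_real_derivative d) (at s) \<and> d \<le> 0"
      by blast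
  next
    show "continuous_on {t0..t} z"
      unfolding z_def using cont \<open>\<beta> < \<gamma>\<close>
      by (auto intro!: continuous_intros intro: continuous_on_subset)
  qed
  moreover have "0 \<le> C / (\<gamma> - \<beta>) * exp (- (\<gamma> - \<beta>) * (t - t0))"
    using assms by simp
  ultimately show ?thesis
    by (simp add: z_def)
qed

section \<open>Abstract energy estimates\<close>

locale decay_parameters =
  fixes \<mu> \<epsilon> K a0 :: real and A Mb :: "real \<Rightarrow> real" and \<alpha> :: real
  assumes eps_pos: "0 < \<epsilon>" and K_pos: "0 < K" and K_less_mu: "K < \<mu>"
    and damping_pos: "0 < \<epsilon> * \<mu> + a0"
    and mono_A: "mono_on {0..} A" and A_nonneg: "\<And>r. 0 \<le> r \<Longrightarrow> 0 \<le> A r"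
    and Mb_nonneg: "\<And>r. 0 \<le> Mb r" and alpha_pos: "0 < \<alpha>"
begin

lemma mu_pos: "0 < \<mu>"
  using K_pos K_less_mu by linarith

text \<open>\<open>E_max\<close> bounds the initial energy and \<open>B\<^sup>2\<close> the quantity \<open>P + Q + R\<close> of the next locale at
  all times; \<open>\<delta>\<close> is the weight of the virial in the Lyapunov function, which decays at rate \<open>\<gamma>\<close>,
  and \<open>\<beta>\<close> is the final decay rate.\<close>

definition "\<kappa> = \<epsilon> + min a0 0 / \<mu>"
definition "\<rho> = (1 - K / \<mu>) / 2"
definition "E_max = (1/2 + Mb \<alpha>) * \<alpha>\<^sup>2"
definition "B = sqrt ((1 + 1 / \<mu>) * E_max / \<rho>)"
definition "M = Mb (max \<alpha> B)"
definition "A_max = A B"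
definition "\<eta> = (\<mu> - K) / (A_max + 1)"
definition "c1 = (\<mu> - K) / (2 * \<mu>)"
definition "c2 = 1 + A_max / (2 * \<eta>)"
definition "c3 = (1 / \<mu> + \<epsilon> + 1) / 2"
definition "c4 = 1/2 + M / \<mu>"
definition "\<delta> = min (\<rho> / (2 * c3)) (\<kappa> * \<mu> / (2 * c2))"
definition "c5 = c4 + \<rho> / 2"
definition "c6 = min (\<kappa> * \<mu> / 2) (\<delta> * c1)"
definition "\<gamma> = c6 / c5"
definition "C_X = 2 * c5 / \<rho>"
definition "c7 = 3 * \<epsilon> * (A_max\<^sup>2 + 1 / \<epsilon>\<^sup>2) + 3 * \<epsilon> * M\<^sup>2 / \<mu>"
definition "\<beta> = min (1 / \<epsilon>) \<gamma> / 2"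
definition "C_total = (1 + 1 / \<mu> + 2 / \<epsilon>\<^sup>2) * C_X + 2 / \<epsilon>\<^sup>2 * (2 * \<epsilon>\<^sup>2 + 2 + c7 * C_X / (\<gamma> - \<beta>))"

lemma kappa_pos: "0 < \<kappa>"
proof (cases "a0 \<ge> 0")
  case True
  then show ?thesis using eps_pos by (simp add: \<kappa>_def)
next
  case False
  then have "\<kappa> = (\<epsilon> * \<mu> + a0) / \<mu>"
    using mu_pos by (simp add: \<kappa>_def field_simps)
  then show ?thesis using damping_pos mu_pos by simp
qed

lemma rho_pos: "0 < \<rho>" and rho_le: "\<rho> \<le> 1/2"
  using K_pos K_less_mu mu_pos by (auto simp: \<rho>_def)

lemma B_nonneg: "0 \<le> B"
  using Mb_nonneg[of \<alpha>] rho_pos mu_pos by (simp add: B_def E_max_def)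

lemma A_max_nonneg: "0 \<le> A_max"
  using A_nonneg[OF B_nonneg] by (simp add: A_max_def)

lemma M_nonneg: "0 \<le> M"
  by (simp add: M_def Mb_nonneg)

lemma eta_pos: "0 < \<eta>"
  using K_less_mu A_max_nonneg by (simp add: \<eta>_def)

lemma A_max_eta_le: "A_max * \<eta> \<le> \<mu> - K"
proof -
  have "A_max * \<eta> = (\<mu> - K) * (A_max / (A_max + 1))"
    by (simp add: \<eta>_def)
  also have "\<dots> \<le> (\<mu> - K) * 1"
    using K_less_mu A_max_nonneg by (intro mult_left_mono) auto
  finally show ?thesis by simp
qed

lemma c1_pos: "0 < c1" and c2_ge: "1 \<le> c2" and c3_pos: "0 < c3" and c4_ge: "1/2 \<le> c4"
  using K_less_mu mu_pos A_max_nonneg eta_pos eps_pos M_nonneg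
  by (auto simp: c1_def c2_def c3_def c4_def add_pos_pos)

lemma delta_pos: "0 < \<delta>"
  using rho_pos c3_pos kappa_pos mu_pos c2_ge by (simp add: \<delta>_def)

lemma delta_c3_le: "\<delta> * c3 \<le> \<rho> / 2"
proof -
  have "\<delta> * c3 \<le> \<rho> / (2 * c3) * c3"
    using c3_pos by (intro mult_right_mono) (auto simp: \<delta>_def)
  then show ?thesis using c3_pos by simp
qed

lemma delta_c2_le: "\<delta> * c2 \<le> \<kappa> * \<mu> / 2"
proof -
  have "\<delta> * c2 \<le> \<kappa> * \<mu> / (2 * c2) * c2"
    using c2_ge by (intro mult_right_mono) (auto simp: \<delta>_def)
  then show ?thesis using c2_ge by simp
qed

lemma c5_pos: "0 < c5"
  using c4_ge rho_pos by (simp add: c5_def)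

lemma c6_pos: "0 < c6" and c6_le: "c6 \<le> \<kappa> * \<mu> / 2" "c6 \<le> \<delta> * c1"
  using kappa_pos mu_pos delta_pos c1_pos by (auto simp: c6_def)

lemma gamma_pos: "0 < \<gamma>"
  using c5_pos c6_pos by (simp add: \<gamma>_def)

lemma C_X_pos: "0 < C_X"
  using c5_pos rho_pos by (simp add: C_X_def)

lemma c7_nonneg: "0 \<le> c7"
  using eps_pos mu_pos by (simp add: c7_def)

lemma beta_pos: "0 < \<beta>" and beta_le: "\<beta> \<le> 1 / \<epsilon>" and beta_less: "\<beta> < \<gamma>"
  using eps_pos gamma_pos divide_right_mono[of 1 2 \<epsilon>] by (auto simp: \<beta>_def min_def)

lemma C_total_pos: "0 < C_total"
proof -
  have "0 \<le> c7 * C_X / (\<gamma> - \<beta>)"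
    using c7_nonneg C_X_pos beta_less by simp
  then show ?thesis
    using mu_pos C_X_pos eps_pos by (simp add: C_total_def add_pos_nonneg)
qed

end

text \<open>Abstract form of the energy estimates for a solution \<open>u\<close> with \<open>v = u\<^sub>t\<close>:
  \<open>P, Q, R, S, T, W\<close> stand for the squared \<open>L\<^sup>2\<close> norms of \<open>u, u\<^sub>x, v, v\<^sub>x, u\<^sub>x\<^sub>x, \<epsilon>u\<^sub>x\<^sub>x - v\<close>,
  \<open>G\<close> for \<open>\<integral> \<integral>\<^sub>0\<^sup>u F\<close> and \<open>H\<close> for \<open>\<integral> u v\<close>; \<open>\<mu>\<close> is a Poincare constant below \<open>\<pi>\<^sup>2\<close>.\<close>

locale energy_inequalities = decay_parameters +
  fixes t0 :: real and P Q R S T W G H :: "real \<Rightarrow> real"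
  assumes P_nonneg: "\<And>t. t \<ge> t0 \<Longrightarrow> 0 \<le> P t"
    and R_nonneg: "\<And>t. t \<ge> t0 \<Longrightarrow> 0 \<le> R t"
    and T_nonneg: "\<And>t. t \<ge> t0 \<Longrightarrow> 0 \<le> T t"
    and W_nonneg: "\<And>t. t \<ge> t0 \<Longrightarrow> 0 \<le> W t"
    and poincare_P: "\<And>t. t \<ge> t0 \<Longrightarrow> \<mu> * P t \<le> Q t"
    and poincare_R: "\<And>t. t \<ge> t0 \<Longrightarrow> \<mu> * R t \<le> S t"
    and G_le: "\<And>t. t \<ge> t0 \<Longrightarrow> G t \<le> K * P t / 2"
    and abs_G_le: "\<And>t r. t \<ge> t0 \<Longrightarrow> 0 \<le> r \<Longrightarrow> P t + Q t \<le> r\<^sup>2 \<Longrightarrow> \<bar>G t\<bar> \<le> Mb r * P t"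
    and abs_H_le: "\<And>t. t \<ge> t0 \<Longrightarrow> \<bar>H t\<bar> \<le> (P t + R t) / 2"
    and T_le: "\<And>t. t \<ge> t0 \<Longrightarrow> T t \<le> 2 * (W t + R t) / \<epsilon>\<^sup>2"
    and W_le: "\<And>t. t \<ge> t0 \<Longrightarrow> W t \<le> 2 * \<epsilon>\<^sup>2 * T t + 2 * R t"
    and energy_deriv: "\<And>t. t > t0 \<Longrightarrow> \<exists>d.
          ((\<lambda>t. R t / 2 + Q t / 2 - G t) has_real_derivative d) (at t) \<and> d \<le> - \<epsilon> * S t - a0 * R t"
    and virial_deriv: "\<And>t. t > t0 \<Longrightarrow> \<exists>d.
          ((\<lambda>t. H t + \<epsilon> / 2 * Q t) has_real_derivative d) (at t) \<and>
          (\<forall>\<eta>>0. d \<le> R t - Q t + K * P t + A (sqrt (P t + Q t + R t)) * (\<eta> * P t / 2 + R t / (2 * \<eta>)))"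
    and W_deriv: "\<And>t. t > t0 \<Longrightarrow> \<exists>d. (W has_real_derivative d) (at t) \<and>
          (\<forall>r\<ge>0. P t + Q t \<le> r\<^sup>2 \<longrightarrow>
             d \<le> - W t / \<epsilon> + 3 * \<epsilon> * ((A (sqrt (P t + Q t + R t)))\<^sup>2 * R t + R t / \<epsilon>\<^sup>2 + (Mb r)\<^sup>2 * P t))"
    and continuous_energy: "continuous_on {t0..} (\<lambda>t. R t / 2 + Q t / 2 - G t)"
    and continuous_virial: "continuous_on {t0..} (\<lambda>t. H t + \<epsilon> / 2 * Q t)"
    and continuous_W: "continuous_on {t0..} W"
    and initial_le: "P t0 + Q t0 + R t0 + T t0 \<le> \<alpha>\<^sup>2"
begin

definition "X t = Q t + R t"
definition "energy t = R t / 2 + Q t / 2 - G t"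
definition "virial t = H t + \<epsilon> / 2 * Q t"
definition "lyapunov t = energy t + \<delta> * virial t"

lemma P_le_Q: "t \<ge> t0 \<Longrightarrow> P t \<le> Q t / \<mu>"
  using poincare_P mu_pos by (simp add: field_simps mult.commute)

lemma R_le_S: "t \<ge> t0 \<Longrightarrow> R t \<le> S t / \<mu>"
  using poincare_R mu_pos by (simp add: field_simps mult.commute)

lemma Q_nonneg: "t \<ge> t0 \<Longrightarrow> 0 \<le> Q t"
  using poincare_P[of t] P_nonneg[of t] mu_pos by (meson order_trans mult_nonneg_nonneg less_imp_le)

lemma S_nonneg: "t \<ge> t0 \<Longrightarrow> 0 \<le> S t"
  using poincare_R[of t] R_nonneg[of t] mu_pos by (meson order_trans mult_nonneg_nonneg less_imp_le)

lemma X_nonneg: "t \<ge> t0 \<Longrightarrow> 0 \<le> X t"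
  using Q_nonneg R_nonneg by (simp add: X_def)

text \<open>With the Poincare inequality for \<open>v\<close>, the damping \<open>\<epsilon> S + a0 R\<close> dominates \<open>\<kappa> S\<close> even when
  \<open>a0 < 0\<close>.\<close>

lemma energy_deriv_le: "t > t0 \<Longrightarrow> \<exists>d. (energy has_real_derivative d) (at t) \<and> d \<le> - \<kappa> * S t"
proof -
  assume t: "t > t0"
  obtain d where d: "(energy has_real_derivative d) (at t)" "d \<le> - \<epsilon> * S t - a0 * R t"
    using energy_deriv[OF t] unfolding energy_def[abs_def] by blast
  have "- \<epsilon> * S t - a0 * R t \<le> - \<kappa> * S t"
  proof (cases "a0 \<ge> 0")
    case True
    then show ?thesis using R_nonneg[of t] t by (simp add: \<kappa>_def)
  next
    case False
    then have "- a0 * R t \<le> - a0 * (S t / \<mu>)"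
      using R_le_S[of t] t by (intro mult_left_mono) auto
    then show ?thesis using False by (simp add: \<kappa>_def algebra_simps)
  qed
  with d show ?thesis by auto
qed

lemma energy_le_initial: "t \<ge> t0 \<Longrightarrow> energy t \<le> energy t0"
proof -
  assume "t \<ge> t0"
  have "\<exists>d. (energy has_real_derivative d) (at s) \<and> d \<le> - 0 * energy s" if s: "s > t0" for s
  proof -
    obtain d where "(energy has_real_derivative d) (at s)" "d \<le> - \<kappa> * S s"
      using energy_deriv_le[OF s] by blast
    moreover have "0 \<le> \<kappa> * S s"
      using kappa_pos S_nonneg[of s] s by simp
    ultimately show ?thesis by auto
  qed
  from exp_decay_of_deriv_le[OF _ this \<open>t \<ge> t0\<close>] continuous_energy
  show ?thesis by (simp add: energy_def[abs_def])
qed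

lemma initial_energy_le: "energy t0 \<le> E_max"
proof -
  have PQ: "P t0 + Q t0 \<le> \<alpha>\<^sup>2"
    using initial_le R_nonneg[of t0] T_nonneg[of t0] by simp
  then have "energy t0 \<le> R t0 / 2 + Q t0 / 2 + Mb \<alpha> * P t0"
    using abs_G_le[of t0 \<alpha>] alpha_pos by (simp add: energy_def)
  also have "\<dots> \<le> (1/2 + Mb \<alpha>) * (P t0 + Q t0 + R t0 + T t0)"
  proof -
    have "0 \<le> Mb \<alpha> * Q t0" "0 \<le> Mb \<alpha> * R t0" "0 \<le> Mb \<alpha> * T t0"
      using Mb_nonneg[of \<alpha>] Q_nonneg[of t0] R_nonneg[of t0] T_nonneg[of t0] by simp_all
    moreover have "(1/2 + Mb \<alpha>) * (P t0 + Q t0 + R t0 + T t0) = P t0 / 2 + Q t0 / 2 + R t0 / 2 + T t0 / 2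
        + Mb \<alpha> * P t0 + Mb \<alpha> * Q t0 + Mb \<alpha> * R t0 + Mb \<alpha> * T t0"
      by (simp add: algebra_simps)
    ultimately show ?thesis
      using P_nonneg[of t0] T_nonneg[of t0] by linarith
  qed
  also have "\<dots> \<le> (1/2 + Mb \<alpha>) * \<alpha>\<^sup>2"
    using initial_le Mb_nonneg[of \<alpha>] by (intro mult_left_mono) auto
  finally show ?thesis by (simp add: E_max_def)
qed

lemma energy_coercive: "t \<ge> t0 \<Longrightarrow> \<rho> * X t \<le> energy t"
proof -
  assume t: "t \<ge> t0"
  have "K * P t \<le> K * (Q t / \<mu>)"
    using P_le_Q[OF t] K_pos by (intro mult_left_mono) auto
  then have "G t \<le> K / \<mu> * Q t / 2"
    using G_le[OF t] by simp
  moreover have "\<rho> * Q t = Q t / 2 - K / \<mu> * Q t / 2"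
    by (simp add: \<rho>_def diff_divide_distrib left_diff_distrib)
  moreover have "\<rho> * R t \<le> R t / 2"
    using rho_le R_nonneg[OF t] mult_right_mono[of \<rho> "1/2" "R t"] by simp
  ultimately show ?thesis
    unfolding X_def energy_def distrib_left by linarith
qed

lemma PQR_le: "t \<ge> t0 \<Longrightarrow> P t + Q t + R t \<le> B\<^sup>2"
proof -
  assume t: "t \<ge> t0"
  have "\<rho> * X t \<le> E_max"
    using energy_coercive[OF t] energy_le_initial[OF t] initial_energy_le by linarith
  then have X: "X t \<le> E_max / \<rho>"
    using rho_pos by (simp add: field_simps mult.commute)
  have "P t + Q t + R t \<le> (1 + 1 / \<mu>) * X t"
    using P_le_Q[OF t] R_nonneg[OF t] mu_pos by (simp add: X_def field_simps)
  also have "\<dots> \<le> (1 + 1 / \<mu>) * (E_max / \<rho>)"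
    using X mu_pos by (intro mult_left_mono) auto
  also have "\<dots> = B\<^sup>2"
    using Mb_nonneg[of \<alpha>] rho_pos mu_pos by (simp add: B_def E_max_def)
  finally show ?thesis .
qed

lemma A_le_A_max: "t \<ge> t0 \<Longrightarrow> A (sqrt (P t + Q t + R t)) \<le> A_max"
proof -
  assume t: "t \<ge> t0"
  have "sqrt (P t + Q t + R t) \<le> B"
    using real_sqrt_le_mono[OF PQR_le[OF t]] B_nonneg by simp
  then show ?thesis
    unfolding A_max_def using P_nonneg[OF t] Q_nonneg[OF t] R_nonneg[OF t] B_nonneg
    by (intro mono_onD[OF mono_A]) auto
qed

lemma A_nonneg_at: "t \<ge> t0 \<Longrightarrow> 0 \<le> A (sqrt (P t + Q t + R t))"
  using P_nonneg Q_nonneg R_nonneg by (intro A_nonneg) simp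

lemma PQ_le: "t \<ge> t0 \<Longrightarrow> P t + Q t \<le> (max \<alpha> B)\<^sup>2"
proof -
  assume t: "t \<ge> t0"
  have "B\<^sup>2 \<le> (max \<alpha> B)\<^sup>2"
    using B_nonneg by (intro power_mono) auto
  then show ?thesis
    using PQR_le[OF t] R_nonneg[OF t] by linarith
qed

lemma abs_G_le_M: "t \<ge> t0 \<Longrightarrow> \<bar>G t\<bar> \<le> M * P t"
  using abs_G_le[OF _ _ PQ_le] B_nonneg by (simp add: M_def)

lemma energy_le: "t \<ge> t0 \<Longrightarrow> energy t \<le> c4 * X t"
proof -
  assume t: "t \<ge> t0"
  have "energy t \<le> R t / 2 + Q t / 2 + M / \<mu> * Q t"
    using abs_G_le_M[OF t] P_le_Q[OF t] M_nonneg mult_left_mono[of "P t" "Q t / \<mu>" M]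
    by (simp add: energy_def)
  moreover have "c4 * X t = R t / 2 + Q t / 2 + M / \<mu> * Q t + M / \<mu> * R t"
    by (simp add: c4_def X_def algebra_simps add_divide_distrib)
  moreover have "0 \<le> M / \<mu> * R t"
    using M_nonneg mu_pos R_nonneg[OF t] by simp
  ultimately show ?thesis by linarith
qed

lemma abs_virial_le: "t \<ge> t0 \<Longrightarrow> \<bar>virial t\<bar> \<le> c3 * X t"
proof -
  assume t: "t \<ge> t0"
  have "\<bar>virial t\<bar> \<le> \<bar>H t\<bar> + \<epsilon> / 2 * Q t"
    using abs_triangle_ineq[of "H t" "\<epsilon> / 2 * Q t"] Q_nonneg[OF t] eps_pos
    by (simp add: virial_def)
  also have "\<dots> \<le> (P t + R t) / 2 + \<epsilon> / 2 * Q t"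
    using abs_H_le[OF t] by simp
  also have "\<dots> \<le> (Q t / \<mu> + R t) / 2 + \<epsilon> / 2 * Q t"
    using P_le_Q[OF t] by (intro add_right_mono divide_right_mono) auto
  also have "\<dots> \<le> c3 * X t"
  proof -
    have "c3 * X t = (Q t / \<mu> + R t) / 2 + \<epsilon> / 2 * Q t + (R t / \<mu> + \<epsilon> * R t + Q t) / 2"
      by (simp add: c3_def X_def algebra_simps add_divide_distrib)
    moreover have "0 \<le> (R t / \<mu> + \<epsilon> * R t + Q t) / 2"
      using R_nonneg[OF t] Q_nonneg[OF t] mu_pos eps_pos by simp
    ultimately show ?thesis by linarith
  qed
  finally show ?thesis .
qed

lemma virial_deriv_le:
  "t > t0 \<Longrightarrow> \<exists>d. (virial has_real_derivative d) (at t) \<and> d \<le> c2 * R t - c1 * Q t"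
proof -
  assume "t > t0"
  then have t: "t \<ge> t0" by simp
  obtain d where d: "(virial has_real_derivative d) (at t)"
      "d \<le> R t - Q t + K * P t + A (sqrt (P t + Q t + R t)) * (\<eta> * P t / 2 + R t / (2 * \<eta>))"
    using virial_deriv[OF \<open>t > t0\<close>] eta_pos unfolding virial_def[abs_def] by blast
  have "A (sqrt (P t + Q t + R t)) * (\<eta> * P t / 2 + R t / (2 * \<eta>))
      \<le> A_max * (\<eta> * P t / 2 + R t / (2 * \<eta>))"
    using A_le_A_max[OF t] eta_pos P_nonneg[OF t] R_nonneg[OF t] by (intro mult_right_mono) auto
  also have "\<dots> \<le> (\<mu> - K) * P t / 2 + A_max * R t / (2 * \<eta>)"
    using mult_right_mono[OF A_max_eta_le P_nonneg[OF t]] by (simp add: algebra_simps)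
  finally have "A (sqrt (P t + Q t + R t)) * (\<eta> * P t / 2 + R t / (2 * \<eta>))
      \<le> (\<mu> - K) * P t / 2 + A_max * R t / (2 * \<eta>)" .
  moreover have "(\<mu> - K) * P t / 2 + K * P t = (\<mu> + K) / 2 * P t"
    by (simp add: field_simps)
  ultimately have "d \<le> R t - Q t + (\<mu> + K) / 2 * P t + A_max * R t / (2 * \<eta>)"
    using d(2) by linarith
  also have "\<dots> \<le> R t - Q t + (\<mu> + K) / 2 * (Q t / \<mu>) + A_max * R t / (2 * \<eta>)"
    using P_le_Q[OF t] K_pos mu_pos by (intro add_right_mono add_left_mono mult_left_mono) auto
  also have "\<dots> = c2 * R t - c1 * Q t"
    using mu_pos eta_pos by (simp add: c1_def c2_def field_simps)
  finally show ?thesis using d(1) by blast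
qed

lemma lyapunov_ge: "t \<ge> t0 \<Longrightarrow> \<rho> / 2 * X t \<le> lyapunov t"
  and lyapunov_le: "t \<ge> t0 \<Longrightarrow> lyapunov t \<le> c5 * X t"
proof -
  assume t: "t \<ge> t0"
  have "\<delta> * \<bar>virial t\<bar> \<le> (\<delta> * c3) * X t"
    using abs_virial_le[OF t] delta_pos by (simp add: mult.assoc mult_left_mono)
  also have "\<dots> \<le> \<rho> / 2 * X t"
    using delta_c3_le X_nonneg[OF t] by (intro mult_right_mono)
  finally have "\<bar>\<delta> * virial t\<bar> \<le> \<rho> / 2 * X t"
    using delta_pos by (simp add: abs_mult)
  then show "\<rho> / 2 * X t \<le> lyapunov t" "lyapunov t \<le> c5 * X t"
    using energy_coercive[OF t] energy_le[OF t]
    by (auto simp: lyapunov_def c5_def algebra_simps abs_le_iff)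
qed

lemma lyapunov_deriv_le:
  "t > t0 \<Longrightarrow> \<exists>d. (lyapunov has_real_derivative d) (at t) \<and> d \<le> - \<gamma> * lyapunov t"
proof -
  assume "t > t0"
  then have t: "t \<ge> t0" by simp
  obtain d1 where d1: "(energy has_real_derivative d1) (at t)" "d1 \<le> - \<kappa> * S t"
    using energy_deriv_le[OF \<open>t > t0\<close>] by blast
  obtain d2 where d2: "(virial has_real_derivative d2) (at t)" "d2 \<le> c2 * R t - c1 * Q t"
    using virial_deriv_le[OF \<open>t > t0\<close>] by blast
  have "(lyapunov has_real_derivative d1 + \<delta> * d2) (at t)"
    unfolding lyapunov_def[abs_def] by (rule DERIV_add[OF d1(1) DERIV_cmult[OF d2(1)]])
  moreover have "d1 + \<delta> * d2 \<le> - c6 * X t"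
  proof -
    have "\<delta> * d2 \<le> \<delta> * (c2 * R t - c1 * Q t)"
      using d2(2) delta_pos by (intro mult_left_mono) auto
    then have "\<delta> * d2 \<le> \<delta> * c2 * R t - \<delta> * c1 * Q t"
      by (simp add: algebra_simps)
    moreover have "\<kappa> * \<mu> * R t \<le> \<kappa> * S t"
      using poincare_R[OF t] kappa_pos by (simp add: mult.assoc)
    moreover have "\<delta> * c2 * R t \<le> \<kappa> * \<mu> / 2 * R t"
      using delta_c2_le R_nonneg[OF t] by (rule mult_right_mono)
    moreover have "c6 * R t \<le> \<kappa> * \<mu> / 2 * R t"
      using c6_le(1) R_nonneg[OF t] by (rule mult_right_mono)
    moreover have "c6 * Q t \<le> \<delta> * c1 * Q t"
      using c6_le(2) Q_nonneg[OF t] by (rule mult_right_mono)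
    ultimately show ?thesis
      using d1(2) by (simp add: X_def algebra_simps)
  qed
  moreover have "- c6 * X t \<le> - \<gamma> * lyapunov t"
    using mult_left_mono[OF lyapunov_le[OF t], of \<gamma>] gamma_pos c5_pos by (simp add: \<gamma>_def)
  ultimately show ?thesis by auto
qed

lemma continuous_lyapunov: "continuous_on {t0..} lyapunov"
proof -
  have "continuous_on {t0..} (\<lambda>t. energy t + \<delta> * virial t)"
    using continuous_on_add[OF continuous_energy continuous_on_mult[OF continuous_on_const continuous_virial]]
    unfolding energy_def[abs_def] virial_def[abs_def] .
  then show ?thesis
    by (simp add: lyapunov_def[abs_def])
qed

lemma X_decay: "t \<ge> t0 \<Longrightarrow> X t \<le> C_X * exp (- \<gamma> * (t - t0)) * X t0"
proof -
  assume t: "t \<ge> t0"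
  have "\<rho> / 2 * X t \<le> exp (- \<gamma> * (t - t0)) * lyapunov t0"
    using lyapunov_ge[OF t] exp_decay_of_deriv_le[OF continuous_lyapunov lyapunov_deriv_le t]
    by linarith
  also have "\<dots> \<le> exp (- \<gamma> * (t - t0)) * (c5 * X t0)"
    using lyapunov_le[of t0] by (intro mult_left_mono) auto
  finally show ?thesis
    using rho_pos by (simp add: C_X_def field_simps)
qed

text \<open>Once \<open>X = \<parallel>u\<^sub>x\<parallel>\<^sup>2 + \<parallel>v\<parallel>\<^sup>2\<close> decays, \<open>W\<close> satisfies a linear inequality with decaying
  forcing, and \<open>T = \<parallel>u\<^sub>x\<^sub>x\<parallel>\<^sup>2\<close> is recovered from \<open>W\<close> and \<open>R\<close>.\<close>

lemma W_deriv_le: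
  "t > t0 \<Longrightarrow> \<exists>d. (W has_real_derivative d) (at t) \<and>
     d \<le> - (1 / \<epsilon>) * W t + c7 * C_X * X t0 * exp (- \<gamma> * (t - t0))"
proof -
  assume "t > t0"
  then have t: "t \<ge> t0" by simp
  obtain d where d: "(W has_real_derivative d) (at t)"
    "d \<le> - W t / \<epsilon> + 3 * \<epsilon> * ((A (sqrt (P t + Q t + R t)))\<^sup>2 * R t + R t / \<epsilon>\<^sup>2 + M\<^sup>2 * P t)"
    using W_deriv[OF \<open>t > t0\<close>] PQ_le[OF t] B_nonneg unfolding M_def by fastforce
  have "(A (sqrt (P t + Q t + R t)))\<^sup>2 * R t \<le> A_max\<^sup>2 * R t"
    using A_le_A_max[OF t] A_nonneg_at[OF t] R_nonneg[OF t]
    by (intro mult_right_mono power_mono) auto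
  moreover have "M\<^sup>2 * P t \<le> M\<^sup>2 * (Q t / \<mu>)"
    using P_le_Q[OF t] by (intro mult_left_mono) auto
  ultimately have "d \<le> - W t / \<epsilon> + 3 * \<epsilon> * (A_max\<^sup>2 * R t + R t / \<epsilon>\<^sup>2 + M\<^sup>2 * (Q t / \<mu>))"
    using d(2) eps_pos by (smt (verit) mult_left_mono)
  also have "\<dots> \<le> - W t / \<epsilon> + c7 * X t"
  proof -
    have "c7 * X t = 3 * \<epsilon> * (A_max\<^sup>2 * R t + R t / \<epsilon>\<^sup>2 + M\<^sup>2 * (Q t / \<mu>))
        + 3 * \<epsilon> * (A_max\<^sup>2 + 1 / \<epsilon>\<^sup>2) * Q t + 3 * \<epsilon> * M\<^sup>2 / \<mu> * R t"
      using eps_pos mu_pos by (simp add: c7_def X_def field_simps)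
    moreover have "0 \<le> 3 * \<epsilon> * (A_max\<^sup>2 + 1 / \<epsilon>\<^sup>2) * Q t" "0 \<le> 3 * \<epsilon> * M\<^sup>2 / \<mu> * R t"
      using eps_pos mu_pos Q_nonneg[OF t] R_nonneg[OF t] by simp_all
    ultimately show ?thesis by linarith
  qed
  also have "\<dots> \<le> - W t / \<epsilon> + c7 * (C_X * exp (- \<gamma> * (t - t0)) * X t0)"
    using X_decay[OF t] c7_nonneg by (intro add_left_mono mult_left_mono)
  finally show ?thesis
    using d(1) by (auto simp: algebra_simps)
qed

lemma W_bound:
  "t \<ge> t0 \<Longrightarrow> exp (\<beta> * (t - t0)) * W t \<le> W t0 + c7 * C_X * X t0 / (\<gamma> - \<beta>)"
  using forced_decay_bound[OF continuous_W W_deriv_le W_nonneg beta_le beta_less]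
    c7_nonneg C_X_pos X_nonneg[of t0] by simp

lemma total_decay:
  assumes t: "t \<ge> t0"
  shows "P t + Q t + R t + T t \<le> C_total * exp (- \<beta> * (t - t0)) * (P t0 + Q t0 + R t0 + T t0)"
proof -
  define N0 where "N0 = P t0 + Q t0 + R t0 + T t0"
  define e where "e = exp (- \<beta> * (t - t0))"
  have X0: "X t0 \<le> N0"
    using P_nonneg[of t0] T_nonneg[of t0] by (simp add: X_def N0_def)
  have W0: "W t0 \<le> (2 * \<epsilon>\<^sup>2 + 2) * N0"
  proof -
    have "T t0 \<le> N0" "R t0 \<le> N0"
      using P_nonneg[of t0] Q_nonneg[of t0] R_nonneg[of t0] T_nonneg[of t0] by (auto simp: N0_def)
    then have "2 * \<epsilon>\<^sup>2 * T t0 + 2 * R t0 \<le> 2 * \<epsilon>\<^sup>2 * N0 + 2 * N0"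
      by (intro add_mono mult_left_mono) auto
    then show ?thesis
      using W_le[of t0] by (simp add: algebra_simps)
  qed
  have "exp (- \<gamma> * (t - t0)) \<le> e"
    unfolding e_def exp_le_cancel_iff using beta_less t by (intro mult_right_mono) auto
  then have "C_X * exp (- \<gamma> * (t - t0)) * X t0 \<le> C_X * e * N0"
    using X0 X_nonneg[of t0] C_X_pos by (intro mult_mono) (auto simp: e_def)
  then have Xt: "X t \<le> C_X * e * N0"
    using X_decay[OF t] by linarith
  have "W t = e * (exp (\<beta> * (t - t0)) * W t)"
    by (simp add: e_def mult.assoc[symmetric] mult_exp_exp)
  also have "\<dots> \<le> e * (W t0 + c7 * C_X * X t0 / (\<gamma> - \<beta>))"
    using W_bound[OF t] by (intro mult_left_mono) (auto simp: e_def)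
  also have "\<dots> \<le> e * ((2 * \<epsilon>\<^sup>2 + 2) * N0 + c7 * C_X * N0 / (\<gamma> - \<beta>))"
    using W0 X0 c7_nonneg C_X_pos beta_less
    by (intro mult_left_mono add_mono divide_right_mono) (auto simp: e_def)
  finally have Wt: "W t \<le> e * ((2 * \<epsilon>\<^sup>2 + 2) * N0 + c7 * C_X * N0 / (\<gamma> - \<beta>))" .
  have "P t + Q t + R t + T t \<le> (1 + 1 / \<mu> + 2 / \<epsilon>\<^sup>2) * X t + 2 / \<epsilon>\<^sup>2 * W t"
  proof -
    have "P t + Q t + R t + T t \<le> Q t / \<mu> + X t + 2 * (W t + R t) / \<epsilon>\<^sup>2"
      using P_le_Q[OF t] T_le[OF t] by (simp add: X_def)
    moreover have "(1 + 1 / \<mu> + 2 / \<epsilon>\<^sup>2) * X t + 2 / \<epsilon>\<^sup>2 * W t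
        = Q t / \<mu> + X t + 2 * (W t + R t) / \<epsilon>\<^sup>2 + R t / \<mu> + 2 * Q t / \<epsilon>\<^sup>2"
      using eps_pos mu_pos by (simp add: X_def field_simps)
    moreover have "0 \<le> R t / \<mu>" "0 \<le> 2 * Q t / \<epsilon>\<^sup>2"
      using R_nonneg[OF t] Q_nonneg[OF t] mu_pos by auto
    ultimately show ?thesis by linarith
  qed
  also have "\<dots> \<le> (1 + 1 / \<mu> + 2 / \<epsilon>\<^sup>2) * (C_X * e * N0)
      + 2 / \<epsilon>\<^sup>2 * (e * ((2 * \<epsilon>\<^sup>2 + 2) * N0 + c7 * C_X * N0 / (\<gamma> - \<beta>)))"
    using Xt Wt mu_pos by (intro add_mono mult_left_mono) auto
  also have "\<dots> = C_total * e * N0"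
    by (simp add: C_total_def algebra_simps add_divide_distrib)
  finally show ?thesis
    by (simp add: e_def N0_def)
qed

lemma sqrt_total_decay:
  assumes "t \<ge> t0"
  shows "sqrt (P t + Q t + R t + T t)
    \<le> sqrt C_total * exp (- (\<beta> / 2) * (t - t0)) * sqrt (P t0 + Q t0 + R t0 + T t0)"
proof -
  have "exp (- \<beta> * (t - t0)) = (exp (- (\<beta> / 2) * (t - t0)))\<^sup>2"
    by (simp add: power2_eq_square mult_exp_exp)
  then have "sqrt (C_total * exp (- \<beta> * (t - t0)) * (P t0 + Q t0 + R t0 + T t0))
      = sqrt C_total * exp (- (\<beta> / 2) * (t - t0)) * sqrt (P t0 + Q t0 + R t0 + T t0)"
    by (simp add: real_sqrt_mult)
  then show ?thesis
    using real_sqrt_le_mono[OF total_decay[OF assms]] by simp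
qed

end

section \<open>Energy estimates for a solution\<close>

text \<open>The derivatives of the solution are named \<open>ux = u\<^sub>x\<close>, \<open>uxx = u\<^sub>x\<^sub>x\<close>, \<open>v = u\<^sub>t\<close>, \<open>uxt = v\<^sub>x\<close>,
  \<open>uxxt = (v\<^sub>x)\<^sub>x\<close>, \<open>utt = v\<^sub>t\<close>; \<open>a0\<close> is a lower bound of the coefficient \<open>a\<close>.\<close>

locale solution = nonlinearity F F' K
  for F F' :: "real \<Rightarrow> real" and K :: real +
  fixes \<epsilon> :: real and a :: "real \<Rightarrow> real \<Rightarrow> real \<Rightarrow> real \<Rightarrow> real \<Rightarrow> real \<Rightarrow> real"
    and A :: "real \<Rightarrow> real" and a0 t0 :: real
    and u v ux uxx uxt uxxt utt :: "real \<Rightarrow> real \<Rightarrow> real"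
  assumes eps_pos: "0 < \<epsilon>" and t0_nonneg: "0 \<le> t0"
    and u_x: "\<And>x t. x \<in> {0..1} \<Longrightarrow> t \<ge> t0 \<Longrightarrow> ((\<lambda>y. u y t) has_real_derivative ux x t) (at x within {0..1})"
    and ux_x: "\<And>x t. x \<in> {0..1} \<Longrightarrow> t \<ge> t0 \<Longrightarrow> ((\<lambda>y. ux y t) has_real_derivative uxx x t) (at x within {0..1})"
    and u_t: "\<And>x t. x \<in> {0..1} \<Longrightarrow> t \<ge> t0 \<Longrightarrow> ((\<lambda>s. u x s) has_real_derivative v x t) (at t within {t0..})"
    and v_x: "\<And>x t. x \<in> {0..1} \<Longrightarrow> t \<ge> t0 \<Longrightarrow> ((\<lambda>y. v y t) has_real_derivative uxt x t) (at x within {0..1})"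
    and uxt_x: "\<And>x t. x \<in> {0..1} \<Longrightarrow> t \<ge> t0 \<Longrightarrow> ((\<lambda>y. uxt y t) has_real_derivative uxxt x t) (at x within {0..1})"
    and v_t: "\<And>x t. x \<in> {0..1} \<Longrightarrow> t \<ge> t0 \<Longrightarrow> ((\<lambda>s. v x s) has_real_derivative utt x t) (at t within {t0..})"
    and continuous_u: "continuous_on ({0..1} \<times> {t0..}) (\<lambda>(x, t). u x t)"
    and continuous_ux: "continuous_on ({0..1} \<times> {t0..}) (\<lambda>(x, t). ux x t)"
    and continuous_uxx: "continuous_on ({0..1} \<times> {t0..}) (\<lambda>(x, t). uxx x t)"
    and continuous_v: "continuous_on ({0..1} \<times> {t0..}) (\<lambda>(x, t). v x t)"
    and continuous_uxt: "continuous_on ({0..1} \<times> {t0..}) (\<lambda>(x, t). uxt x t)"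
    and continuous_uxxt: "continuous_on ({0..1} \<times> {t0..}) (\<lambda>(x, t). uxxt x t)"
    and continuous_utt: "continuous_on ({0..1} \<times> {t0..}) (\<lambda>(x, t). utt x t)"
    and equation: "\<And>x t. x \<in> {0<..<1} \<Longrightarrow> t > t0 \<Longrightarrow>
       - \<epsilon> * uxxt x t + utt x t - uxx x t = F (u x t) - a x t (u x t) (ux x t) (uxx x t) (v x t) * v x t"
    and boundary: "\<And>t. t \<ge> t0 \<Longrightarrow> u 0 t = 0 \<and> u 1 t = 0"
    and a_ge: "\<And>x t p q r s. x \<in> {0<..<1} \<Longrightarrow> t \<ge> 0 \<Longrightarrow> a0 \<le> a x t p q r s"
    and a_bound: "\<And>x t \<phi> \<psi>. x \<in> {0<..<1} \<Longrightarrow> t \<ge> 0 \<Longrightarrow> (\<phi>, \<psi>) \<in> Gamma \<Longrightarrow>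
       \<bar>a x t (\<phi> x) (deriv \<phi> x) (deriv (deriv \<phi>) x) (\<psi> x)\<bar> \<le> A (dist_d1 \<phi> \<psi>)"
    and A_nonneg: "\<And>r. r \<ge> 0 \<Longrightarrow> A r \<ge> 0"
begin

lemma ux_t: "x \<in> {0..1} \<Longrightarrow> t \<ge> t0 \<Longrightarrow> ((\<lambda>s. ux x s) has_real_derivative uxt x t) (at t within {t0..})"
  by (rule has_real_derivative_mixed_partial[OF u_t u_x v_x continuous_v continuous_uxt])

lemma uxx_t: "x \<in> {0..1} \<Longrightarrow> t \<ge> t0 \<Longrightarrow> ((\<lambda>s. uxx x s) has_real_derivative uxxt x t) (at t within {t0..})"
  by (rule has_real_derivative_mixed_partial[OF ux_t ux_x uxt_x continuous_uxt continuous_uxxt])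

lemmas continuous_fields =
  continuous_u continuous_ux continuous_uxx continuous_v continuous_uxt continuous_uxxt continuous_utt

lemma continuous_fields_fst_snd:
  "continuous_on ({0..1} \<times> {t0..}) (\<lambda>p. u (fst p) (snd p))"
  "continuous_on ({0..1} \<times> {t0..}) (\<lambda>p. ux (fst p) (snd p))"
  "continuous_on ({0..1} \<times> {t0..}) (\<lambda>p. uxx (fst p) (snd p))"
  "continuous_on ({0..1} \<times> {t0..}) (\<lambda>p. v (fst p) (snd p))"
  "continuous_on ({0..1} \<times> {t0..}) (\<lambda>p. uxt (fst p) (snd p))"
  "continuous_on ({0..1} \<times> {t0..}) (\<lambda>p. uxxt (fst p) (snd p))"
  "continuous_on ({0..1} \<times> {t0..}) (\<lambda>p. utt (fst p) (snd p))"
  "continuous_on ({0..1} \<times> {t0..}) (\<lambda>p. F (u (fst p) (snd p)))"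
  "continuous_on ({0..1} \<times> {t0..}) (\<lambda>p. primitive F (u (fst p) (snd p)))"
proof -
  show uc: "continuous_on ({0..1} \<times> {t0..}) (\<lambda>p. u (fst p) (snd p))"
    using continuous_u by (simp add: case_prod_unfold)
  show "continuous_on ({0..1} \<times> {t0..}) (\<lambda>p. F (u (fst p) (snd p)))"
    by (rule continuous_on_compose2[OF continuous_F uc]) auto
  show "continuous_on ({0..1} \<times> {t0..}) (\<lambda>p. primitive F (u (fst p) (snd p)))"
    by (rule continuous_on_compose2[OF continuous_primitive uc]) auto
qed (use continuous_fields in \<open>simp_all add: case_prod_unfold\<close>)

lemma continuous_sections:
  assumes "t \<ge> t0"
  shows "continuous_on {0..1} (\<lambda>x. u x t)" "continuous_on {0..1} (\<lambda>x. ux x t)"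
    "continuous_on {0..1} (\<lambda>x. uxx x t)" "continuous_on {0..1} (\<lambda>x. v x t)"
    "continuous_on {0..1} (\<lambda>x. uxt x t)" "continuous_on {0..1} (\<lambda>x. uxxt x t)"
    "continuous_on {0..1} (\<lambda>x. utt x t)" "continuous_on {0..1} (\<lambda>x. F (u x t))"
    "continuous_on {0..1} (\<lambda>x. primitive F (u x t))"
proof -
  have sec: "continuous_on {0..1} (\<lambda>x. f x t)" if "continuous_on ({0..1} \<times> {t0..}) (\<lambda>(x, t). f x t)"
    for f :: "real \<Rightarrow> real \<Rightarrow> real"
    using continuous_on_section_left[OF that] assms by simp
  show uc: "continuous_on {0..1} (\<lambda>x. u x t)"
    by (rule sec[OF continuous_u])
  show "continuous_on {0..1} (\<lambda>x. F (u x t))"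
    by (rule continuous_on_compose2[OF continuous_F uc]) auto
  show "continuous_on {0..1} (\<lambda>x. primitive F (u x t))"
    by (rule continuous_on_compose2[OF continuous_primitive uc]) auto
  show "continuous_on {0..1} (\<lambda>x. ux x t)" "continuous_on {0..1} (\<lambda>x. uxx x t)"
    "continuous_on {0..1} (\<lambda>x. v x t)" "continuous_on {0..1} (\<lambda>x. uxt x t)"
    "continuous_on {0..1} (\<lambda>x. uxxt x t)" "continuous_on {0..1} (\<lambda>x. utt x t)"
    by (simp_all add: sec continuous_fields)
qed

lemma v_boundary: "t \<ge> t0 \<Longrightarrow> v 0 t = 0 \<and> v 1 t = 0"
proof -
  assume t: "t \<ge> t0"
  have "v x t = 0" if "x = 0 \<or> x = 1" for x
  proof -
    have "((\<lambda>s. u x s) has_real_derivative 0) (at t within {t0..})"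
      by (rule has_field_derivative_transform_within[OF DERIV_const zero_less_one])
         (use t that boundary in auto)
    then show ?thesis
      using has_field_derivative_unique[OF u_t[of x t] _ at_within_Ici_nontrivial[OF t]] that t by auto
  qed
  then show ?thesis by simp
qed

definition "Nu t = integral {0..1} (\<lambda>x. (u x t)\<^sup>2)"
definition "Nux t = integral {0..1} (\<lambda>x. (ux x t)\<^sup>2)"
definition "Nv t = integral {0..1} (\<lambda>x. (v x t)\<^sup>2)"
definition "Nvx t = integral {0..1} (\<lambda>x. (uxt x t)\<^sup>2)"
definition "Nuxx t = integral {0..1} (\<lambda>x. (uxx x t)\<^sup>2)"
definition "w x t = \<epsilon> * uxx x t - v x t"
definition "Nw t = integral {0..1} (\<lambda>x. (w x t)\<^sup>2)"
definition "potential t = integral {0..1} (\<lambda>x. primitive F (u x t))"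
definition "cross t = integral {0..1} (\<lambda>x. u x t * v x t)"

definition "friction x t = uxx x t + \<epsilon> * uxxt x t + F (u x t) - utt x t"

lemma friction_eq:
  "x \<in> {0<..<1} \<Longrightarrow> t > t0 \<Longrightarrow> friction x t = a x t (u x t) (ux x t) (uxx x t) (v x t) * v x t"
  using equation[of x t] by (simp add: friction_def algebra_simps)

lemma continuous_sections_w_friction:
  "t \<ge> t0 \<Longrightarrow> continuous_on {0..1} (\<lambda>x. w x t)"
  "t \<ge> t0 \<Longrightarrow> continuous_on {0..1} (\<lambda>x. friction x t)"
  unfolding w_def friction_def using continuous_sections by (auto intro!: continuous_intros)

lemmas continuous_all_sections = continuous_sections continuous_sections_w_friction

context
  fixes t :: real assumes t: "t \<ge> t0"
begin

lemma Nu_nonneg: "0 \<le> Nu t" and Nv_nonneg: "0 \<le> Nv t" and Nux_nonneg: "0 \<le> Nux t"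
  and Nuxx_nonneg: "0 \<le> Nuxx t" and Nw_nonneg: "0 \<le> Nw t"
  unfolding Nu_def Nv_def Nux_def Nuxx_def Nw_def using continuous_all_sections[OF t]
  by (auto intro!: integral_nonneg integrable_continuous_real continuous_intros)

lemma poincare_u: "0 < c \<Longrightarrow> c < pi \<Longrightarrow> c\<^sup>2 * Nu t \<le> Nux t"
  unfolding Nu_def Nux_def using u_x t continuous_sections(2)[OF t] boundary[OF t]
  by (intro poincare_inequality_01) auto

lemma poincare_v: "0 < c \<Longrightarrow> c < pi \<Longrightarrow> c\<^sup>2 * Nv t \<le> Nvx t"
  unfolding Nv_def Nvx_def using v_x t continuous_sections(5)[OF t] v_boundary[OF t]
  by (intro poincare_inequality_01) auto

lemma abs_u_le: "x \<in> {0..1} \<Longrightarrow> 0 \<le> r \<Longrightarrow> Nu t + Nux t \<le> r\<^sup>2 \<Longrightarrow> \<bar>u x t\<bar> \<le> r"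
proof -
  assume x: "x \<in> {0..1}" and r: "0 \<le> r" and le: "Nu t + Nux t \<le> r\<^sup>2"
  have "(u x t)\<^sup>2 \<le> integral {0..1} (\<lambda>y. (u y t)\<^sup>2 + (ux y t)\<^sup>2)"
    using u_x t continuous_sections(2)[OF t] boundary[OF t] x
    by (intro sq_le_integral_sq_add_sq_deriv) auto
  also have "\<dots> = Nu t + Nux t"
    unfolding Nu_def Nux_def using continuous_sections[OF t]
    by (intro integral_add) (auto intro!: integrable_continuous_real continuous_intros)
  finally have "(u x t)\<^sup>2 \<le> r\<^sup>2"
    using le by linarith
  then show ?thesis
    using r abs_le_square_iff[of "u x t" r] by simp
qed

lemma potential_le: "potential t \<le> K * Nu t / 2"
proof -
  have "potential t \<le> integral {0..1} (\<lambda>x. K / 2 * (u x t)\<^sup>2)"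
    unfolding potential_def using continuous_sections[OF t] primitive_le
    by (intro integral_le) (auto intro!: integrable_continuous_real continuous_intros)
  then show ?thesis by (simp add: Nu_def)
qed

lemma abs_potential_le: "0 \<le> r \<Longrightarrow> Nu t + Nux t \<le> r\<^sup>2 \<Longrightarrow> \<bar>potential t\<bar> \<le> deriv_bound r * Nu t"
proof -
  assume r: "0 \<le> r" and le: "Nu t + Nux t \<le> r\<^sup>2"
  have "\<bar>potential t\<bar> \<le> integral {0..1} (\<lambda>x. deriv_bound r * (u x t)\<^sup>2)"
    unfolding potential_def using continuous_sections[OF t] abs_primitive_le abs_u_le[OF _ r le]
    by (intro abs_integral_le_of_le_on_interior) (auto intro!: integrable_continuous_real continuous_intros)
  then show ?thesis by (simp add: Nu_def)
qed

lemma abs_cross_le: "\<bar>cross t\<bar> \<le> (Nu t + Nv t) / 2"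
proof -
  have "\<bar>cross t\<bar> \<le> integral {0..1} (\<lambda>x. (u x t)\<^sup>2 / 2 + (v x t)\<^sup>2 / 2)"
    unfolding cross_def using continuous_sections[OF t] abs_mult_le_young[of 1]
    by (intro abs_integral_le_of_le_on_interior) (auto intro!: integrable_continuous_real continuous_intros)
  also have "\<dots> = (Nu t + Nv t) / 2"
    unfolding Nu_def Nv_def using continuous_sections[OF t]
    by (subst integral_add) (auto intro!: integrable_continuous_real continuous_intros)
  finally show ?thesis .
qed

lemma u_F_le: "integral {0..1} (\<lambda>x. u x t * F (u x t)) \<le> K * Nu t"
proof -
  have "integral {0..1} (\<lambda>x. u x t * F (u x t)) \<le> integral {0..1} (\<lambda>x. K * (u x t)\<^sup>2)"
    using continuous_sections[OF t] mult_F_le by (intro integral_le) (auto intro!: integrable_continuous_real continuous_intros)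
  then show ?thesis by (simp add: Nu_def)
qed

lemma Nuxx_le: "Nuxx t \<le> 2 * (Nw t + Nv t) / \<epsilon>\<^sup>2"
proof -
  have "Nuxx t \<le> integral {0..1} (\<lambda>x. 2 / \<epsilon>\<^sup>2 * ((w x t)\<^sup>2 + (v x t)\<^sup>2))"
    unfolding Nuxx_def
  proof (intro integral_le)
    fix x
    have "uxx x t = (w x t + v x t) / \<epsilon>"
      using eps_pos by (simp add: w_def field_simps)
    then show "(uxx x t)\<^sup>2 \<le> 2 / \<epsilon>\<^sup>2 * ((w x t)\<^sup>2 + (v x t)\<^sup>2)"
      using sq_add_le[of "w x t" "v x t"] eps_pos by (simp add: power_divide divide_right_mono)
  qed (use continuous_all_sections[OF t] eps_pos in \<open>auto intro!: integrable_continuous_real continuous_intros\<close>)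
  also have "\<dots> = 2 / \<epsilon>\<^sup>2 * (Nw t + Nv t)"
    unfolding Nw_def Nv_def using continuous_all_sections[OF t]
    by (subst integral_mult_right, subst integral_add) (auto intro!: integrable_continuous_real continuous_intros)
  finally show ?thesis by simp
qed

lemma Nw_le: "Nw t \<le> 2 * \<epsilon>\<^sup>2 * Nuxx t + 2 * Nv t"
proof -
  have "Nw t \<le> integral {0..1} (\<lambda>x. 2 * \<epsilon>\<^sup>2 * (uxx x t)\<^sup>2 + 2 * (v x t)\<^sup>2)"
    unfolding Nw_def
  proof (intro integral_le)
    show "(w x t)\<^sup>2 \<le> 2 * \<epsilon>\<^sup>2 * (uxx x t)\<^sup>2 + 2 * (v x t)\<^sup>2" for x
      using sq_add_le[of "\<epsilon> * uxx x t" "- v x t"] by (simp add: w_def power_mult_distrib)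
  qed (use continuous_all_sections[OF t] in \<open>auto intro!: integrable_continuous_real continuous_intros\<close>)
  also have "\<dots> = 2 * \<epsilon>\<^sup>2 * Nuxx t + 2 * Nv t"
    unfolding Nuxx_def Nv_def using continuous_sections[OF t]
    by (subst integral_add) (auto intro!: integrable_continuous_real continuous_intros)
  finally show ?thesis .
qed

end

lemma section_in_Gamma: "t \<ge> t0 \<Longrightarrow> ((\<lambda>y. u y t), (\<lambda>y. v y t)) \<in> Gamma"
proof -
  assume t: "t \<ge> t0"
  have "C2_01 (\<lambda>y. u y t)"
    unfolding C2_01_def
  proof (intro exI conjI)
    show "\<forall>x\<in>{0..1}. ((\<lambda>y. u y t) has_real_derivative ux x t) (at x within {0..1})"
      using u_x t by simp
    show "\<forall>x\<in>{0..1}. ((\<lambda>y. ux y t) has_real_derivative uxx x t) (at x within {0..1})"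
      using ux_x t by simp
  qed (rule continuous_sections(3)[OF t])
  then show ?thesis
    unfolding Gamma_def using continuous_sections(4)[OF t] boundary[OF t] v_boundary[OF t] by simp
qed

lemma deriv_section:
  assumes "x \<in> {0<..<1}" "t \<ge> t0"
  shows "deriv (\<lambda>y. u y t) x = ux x t" and "deriv (deriv (\<lambda>y. u y t)) x = uxx x t"
proof -
  have ux: "deriv (\<lambda>y. u y t) y = ux y t" if "y \<in> {0<..<1}" for y
    using u_x[of y t] assms(2) that by (intro DERIV_imp_deriv) (simp add: at_within_Icc_at)
  then show "deriv (\<lambda>y. u y t) x = ux x t"
    using assms(1) .
  have "((\<lambda>y. ux y t) has_real_derivative uxx x t) (at x)"
    using ux_x[of x t] assms by (simp add: at_within_Icc_at)
  then have "(deriv (\<lambda>y. u y t) has_real_derivative uxx x t) (at x)"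
    by (rule has_field_derivative_transform_within_open[where S = "{0<..<1}"]) (use assms ux in auto)
  then show "deriv (deriv (\<lambda>y. u y t)) x = uxx x t"
    by (rule DERIV_imp_deriv)
qed

lemma dist_d1_section: "t \<ge> t0 \<Longrightarrow> dist_d1 (\<lambda>y. u y t) (\<lambda>y. v y t) = sqrt (Nu t + Nux t + Nv t)"
proof -
  assume t: "t \<ge> t0"
  have "integral {0..1} (\<lambda>x. (u x t)\<^sup>2 + (deriv (\<lambda>y. u y t) x)\<^sup>2 + (v x t)\<^sup>2)
      = integral {0..1} (\<lambda>x. (u x t)\<^sup>2 + (ux x t)\<^sup>2 + (v x t)\<^sup>2)"
    by (rule integral_spike[where S = "{0, 1}"]) (use deriv_section t in auto)
  also have "\<dots> = Nu t + Nux t + Nv t"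
    unfolding Nu_def Nux_def Nv_def using continuous_sections[OF t]
    by (simp add: integral_add integrable_continuous_real continuous_intros)
  finally show ?thesis by (simp add: dist_d1_def)
qed

lemma dist_d_section:
  "t \<ge> t0 \<Longrightarrow> dist_d (\<lambda>y. u y t) (\<lambda>y. v y t) = sqrt (Nu t + Nux t + Nv t + Nuxx t)"
proof -
  assume t: "t \<ge> t0"
  have "integral {0..1} (\<lambda>x. (u x t)\<^sup>2 + (deriv (\<lambda>y. u y t) x)\<^sup>2
          + (deriv (deriv (\<lambda>y. u y t)) x)\<^sup>2 + (v x t)\<^sup>2)
      = integral {0..1} (\<lambda>x. (u x t)\<^sup>2 + (ux x t)\<^sup>2 + (uxx x t)\<^sup>2 + (v x t)\<^sup>2)"
    by (rule integral_spike[where S = "{0, 1}"]) (use deriv_section t in auto)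
  also have "\<dots> = Nu t + Nux t + Nv t + Nuxx t"
    unfolding Nu_def Nux_def Nv_def Nuxx_def using continuous_sections[OF t]
    by (simp add: integral_add integrable_continuous_real continuous_intros)
  finally show ?thesis by (simp add: dist_d_def)
qed

lemma abs_a_le:
  "x \<in> {0<..<1} \<Longrightarrow> t \<ge> t0 \<Longrightarrow>
     \<bar>a x t (u x t) (ux x t) (uxx x t) (v x t)\<bar> \<le> A (sqrt (Nu t + Nux t + Nv t))"
  using a_bound[OF _ _ section_in_Gamma, of x t] t0_nonneg deriv_section dist_d1_section by simp

context
  fixes t :: real assumes t: "t > t0"
begin

lemma friction_work_ge: "a0 * Nv t \<le> integral {0..1} (\<lambda>x. v x t * friction x t)"
proof -
  have "integral {0..1} (\<lambda>x. a0 * (v x t)\<^sup>2) \<le> integral {0..1} (\<lambda>x. v x t * friction x t)"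
  proof (rule integral_le_of_le_on_interior)
    fix x :: real assume x: "x \<in> {0<..<1}"
    have "a0 * (v x t)\<^sup>2 \<le> a x t (u x t) (ux x t) (uxx x t) (v x t) * (v x t)\<^sup>2"
      using a_ge[OF x] t t0_nonneg by (intro mult_right_mono) auto
    then show "a0 * (v x t)\<^sup>2 \<le> v x t * friction x t"
      using friction_eq[OF x t] by (simp add: power2_eq_square algebra_simps)
  qed (use continuous_all_sections t in \<open>auto intro!: integrable_continuous_real continuous_intros\<close>)
  then show ?thesis by (simp add: Nv_def)
qed

lemma abs_u_friction_le:
  assumes "0 < \<eta>"
  shows "\<bar>integral {0..1} (\<lambda>x. u x t * friction x t)\<bar>
    \<le> A (sqrt (Nu t + Nux t + Nv t)) * (\<eta> * Nu t / 2 + Nv t / (2 * \<eta>))"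
proof -
  let ?A = "A (sqrt (Nu t + Nux t + Nv t))"
  have A_nonneg: "0 \<le> ?A"
    using t Nu_nonneg Nux_nonneg Nv_nonneg by (intro A_nonneg) simp
  have "\<bar>integral {0..1} (\<lambda>x. u x t * friction x t)\<bar>
      \<le> integral {0..1} (\<lambda>x. ?A * \<eta> / 2 * (u x t)\<^sup>2 + ?A / (2 * \<eta>) * (v x t)\<^sup>2)"
  proof (rule abs_integral_le_of_le_on_interior)
    fix x :: real assume x: "x \<in> {0<..<1}"
    have "\<bar>u x t * friction x t\<bar> = \<bar>a x t (u x t) (ux x t) (uxx x t) (v x t)\<bar> * \<bar>u x t * v x t\<bar>"
      using friction_eq[OF x t] by (simp add: abs_mult)
    also have "\<dots> \<le> ?A * (\<eta> * (u x t)\<^sup>2 / 2 + (v x t)\<^sup>2 / (2 * \<eta>))"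
      using abs_a_le[OF x] t abs_mult_le_young[OF assms] A_nonneg by (intro mult_mono) auto
    finally show "\<bar>u x t * friction x t\<bar> \<le> ?A * \<eta> / 2 * (u x t)\<^sup>2 + ?A / (2 * \<eta>) * (v x t)\<^sup>2"
      by (simp add: algebra_simps)
  qed (use continuous_all_sections t assms in \<open>auto intro!: integrable_continuous_real continuous_intros\<close>)
  also have "\<dots> = ?A * (\<eta> * Nu t / 2 + Nv t / (2 * \<eta>))"
    unfolding Nu_def Nv_def using continuous_sections t assms
    by (simp add: integral_add integrable_continuous_real continuous_intros algebra_simps)
  finally show ?thesis .
qed

lemma w_forcing_le:
  assumes r: "0 \<le> r" and le: "Nu t + Nux t \<le> r\<^sup>2"
  shows "2 * integral {0..1} (\<lambda>x. w x t * (friction x t - v x t / \<epsilon> - F (u x t)))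
    \<le> Nw t / \<epsilon> + 3 * \<epsilon> * ((A (sqrt (Nu t + Nux t + Nv t)))\<^sup>2 * Nv t + Nv t / \<epsilon>\<^sup>2
                            + (deriv_bound r)\<^sup>2 * Nu t)"
proof -
  let ?A = "A (sqrt (Nu t + Nux t + Nv t))" and ?M = "deriv_bound r"
  have A_nonneg: "0 \<le> ?A"
    using t Nu_nonneg Nux_nonneg Nv_nonneg by (intro A_nonneg) simp
  have "integral {0..1} (\<lambda>x. 2 * (w x t * (friction x t - v x t / \<epsilon> - F (u x t))))
     \<le> integral {0..1} (\<lambda>x. 1 / \<epsilon> * (w x t)\<^sup>2 + (3 * \<epsilon> * ?A\<^sup>2 + 3 / \<epsilon>) * (v x t)\<^sup>2
                             + 3 * \<epsilon> * ?M\<^sup>2 * (u x t)\<^sup>2)"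
  proof (rule integral_le_of_le_on_interior)
    fix x :: real assume x: "x \<in> {0<..<1}"
    define z where "z = friction x t - v x t / \<epsilon> - F (u x t)"
    have "(a x t (u x t) (ux x t) (uxx x t) (v x t))\<^sup>2 \<le> ?A\<^sup>2"
      using abs_a_le[OF x, of t] t A_nonneg abs_le_square_iff[of _ ?A] by simp
    then have "(friction x t)\<^sup>2 \<le> ?A\<^sup>2 * (v x t)\<^sup>2"
      using friction_eq[OF x t] by (simp add: power_mult_distrib mult_right_mono)
    moreover have "(F (u x t))\<^sup>2 \<le> ?M\<^sup>2 * (u x t)\<^sup>2"
    proof -
      have "\<bar>u x t\<bar> \<le> r"
        using abs_u_le[of t x r] t x r le by simp
      then have "\<bar>F (u x t)\<bar> \<le> \<bar>?M * u x t\<bar>"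
        using abs_F_le deriv_bound_nonneg by (simp add: abs_mult)
      then show ?thesis
        by (simp add: abs_le_square_iff power_mult_distrib)
    qed
    ultimately have "z\<^sup>2 \<le> 3 * (?A\<^sup>2 * (v x t)\<^sup>2 + (v x t / \<epsilon>)\<^sup>2 + ?M\<^sup>2 * (u x t)\<^sup>2)"
      using sq_add3_le[of "friction x t" "- (v x t / \<epsilon>)" "- F (u x t)"] by (simp add: z_def)
    moreover have "2 * (w x t * z) \<le> 1 / \<epsilon> * (w x t)\<^sup>2 + \<epsilon> * z\<^sup>2"
    proof -
      have "2 * (w x t * z) \<le> 2 * (1 / \<epsilon> * (w x t)\<^sup>2 / 2 + z\<^sup>2 / (2 * (1 / \<epsilon>)))"
        using abs_mult_le_young[of "1 / \<epsilon>" "w x t" z] abs_ge_self[of "w x t * z"] eps_pos by simp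
      then show ?thesis
        using eps_pos by (simp add: field_simps)
    qed
    ultimately have "2 * (w x t * z) \<le> 1 / \<epsilon> * (w x t)\<^sup>2
        + \<epsilon> * (3 * (?A\<^sup>2 * (v x t)\<^sup>2 + (v x t / \<epsilon>)\<^sup>2 + ?M\<^sup>2 * (u x t)\<^sup>2))"
      using eps_pos by (smt (verit) mult_left_mono)
    moreover have "\<epsilon> * (3 * (?A\<^sup>2 * (v x t)\<^sup>2 + (v x t / \<epsilon>)\<^sup>2 + ?M\<^sup>2 * (u x t)\<^sup>2))
        = (3 * \<epsilon> * ?A\<^sup>2 + 3 / \<epsilon>) * (v x t)\<^sup>2 + 3 * \<epsilon> * ?M\<^sup>2 * (u x t)\<^sup>2"
      using eps_pos by (simp add: field_simps power2_eq_square)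
    ultimately show "2 * (w x t * z) \<le> 1 / \<epsilon> * (w x t)\<^sup>2 + (3 * \<epsilon> * ?A\<^sup>2 + 3 / \<epsilon>) * (v x t)\<^sup>2
        + 3 * \<epsilon> * ?M\<^sup>2 * (u x t)\<^sup>2"
      by linarith
  qed (use continuous_all_sections t eps_pos in \<open>auto intro!: integrable_continuous_real continuous_intros\<close>)
  also have "\<dots> = Nw t / \<epsilon> + 3 * \<epsilon> * (?A\<^sup>2 * Nv t + Nv t / \<epsilon>\<^sup>2 + ?M\<^sup>2 * Nu t)"
  proof -
    have lin: "integral {0..1} (\<lambda>x. c1 * (w x t)\<^sup>2 + c2 * (v x t)\<^sup>2 + c3 * (u x t)\<^sup>2)
        = c1 * Nw t + c2 * Nv t + c3 * Nu t" for c1 c2 c3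
      unfolding Nu_def Nv_def Nw_def using continuous_all_sections t
      by (simp add: integral_add integrable_continuous_real continuous_intros)
    have "1 / \<epsilon> * Nw t + (3 * \<epsilon> * ?A\<^sup>2 + 3 / \<epsilon>) * Nv t + 3 * \<epsilon> * ?M\<^sup>2 * Nu t
        = Nw t / \<epsilon> + 3 * \<epsilon> * (?A\<^sup>2 * Nv t + Nv t / \<epsilon>\<^sup>2 + ?M\<^sup>2 * Nu t)"
      using eps_pos by (simp add: field_simps power2_eq_square)
    then show ?thesis
      by (rule trans[OF lin])
  qed
  finally show ?thesis
    by (simp only: integral_mult_right)
qed

end

context
  fixes t :: real assumes t: "t \<ge> t0"
begin

lemma has_derivative_Nv:
  "(Nv has_real_derivative integral {0..1} (\<lambda>x. 2 * v x t * utt x t)) (at t within {t0..})"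
  unfolding Nv_def[abs_def]
  by (rule has_derivative_sq_integral[OF v_t continuous_fields_fst_snd(4,7) t])

lemma has_derivative_Nux:
  "(Nux has_real_derivative integral {0..1} (\<lambda>x. 2 * ux x t * uxt x t)) (at t within {t0..})"
  unfolding Nux_def[abs_def]
  by (rule has_derivative_sq_integral[OF ux_t continuous_fields_fst_snd(2,5) t])

lemma has_derivative_Nw:
  "(Nw has_real_derivative integral {0..1} (\<lambda>x. 2 * w x t * (\<epsilon> * uxxt x t - utt x t))) (at t within {t0..})"
  unfolding Nw_def[abs_def] w_def
  by (rule has_derivative_sq_integral)
     (auto intro!: derivative_eq_intros uxx_t v_t t continuous_intros continuous_fields_fst_snd)

lemma has_derivative_potential:
  "(potential has_real_derivative integral {0..1} (\<lambda>x. v x t * F (u x t))) (at t within {t0..})"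
  unfolding potential_def[abs_def]
proof (rule has_real_derivative_integral_parameter)
  show "((\<lambda>s. primitive F (u x s)) has_real_derivative v x s * F (u x s)) (at s within {t0..})"
    if "x \<in> {0..1}" "s \<in> {t0..}" for x s
    using DERIV_chain2[OF has_derivative_primitive u_t[of x s]] that by (simp add: mult.commute)
qed (use t continuous_fields_fst_snd in \<open>auto intro!: integrable_continuous_real continuous_intros simp: case_prod_unfold\<close>)

lemma has_derivative_cross:
  "(cross has_real_derivative integral {0..1} (\<lambda>x. (v x t)\<^sup>2 + u x t * utt x t)) (at t within {t0..})"
  unfolding cross_def[abs_def]
proof (rule has_real_derivative_integral_parameter)
  show "((\<lambda>s. u x s * v x s) has_real_derivative (v x s)\<^sup>2 + u x s * utt x s) (at s within {t0..})"
    if "x \<in> {0..1}" "s \<in> {t0..}" for x s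
    using DERIV_mult[OF u_t v_t] that by (simp add: power2_eq_square algebra_simps)
qed (use t continuous_fields_fst_snd in \<open>auto intro!: integrable_continuous_real continuous_intros simp: case_prod_unfold\<close>)

lemma integral_by_parts_x:
  assumes "\<And>x. x \<in> {0..1} \<Longrightarrow> ((\<lambda>y. f y t) has_real_derivative f' x t) (at x within {0..1})"
    and "\<And>x. x \<in> {0..1} \<Longrightarrow> ((\<lambda>y. g y t) has_real_derivative g' x t) (at x within {0..1})"
    and "continuous_on {0..1} (\<lambda>x. f' x t)" "continuous_on {0..1} (\<lambda>x. g' x t)"
    and "f 0 t = 0" "f 1 t = 0"
  shows "integral {0..1} (\<lambda>x. f' x t * g x t) = - integral {0..1} (\<lambda>x. f x t * g' x t)"
  using integration_by_parts_vanishing[of 0 1 "\<lambda>y. f y t" "\<lambda>x. f' x t" "\<lambda>y. g y t" "\<lambda>x. g' x t"] assms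
  by simp

lemma energy_has_derivative:
  "((\<lambda>t. Nv t / 2 + Nux t / 2 - potential t) has_real_derivative
      - \<epsilon> * Nvx t - integral {0..1} (\<lambda>x. v x t * friction x t)) (at t within {t0..})"
proof -
  have "((\<lambda>t. Nv t / 2 + Nux t / 2 - potential t) has_real_derivative
      integral {0..1} (\<lambda>x. 2 * v x t * utt x t) / 2 + integral {0..1} (\<lambda>x. 2 * ux x t * uxt x t) / 2
      - integral {0..1} (\<lambda>x. v x t * F (u x t))) (at t within {t0..})"
    by (intro DERIV_diff DERIV_add DERIV_cdivide has_derivative_Nv has_derivative_Nux has_derivative_potential)
  moreover have "integral {0..1} (\<lambda>x. uxt x t * ux x t) = - integral {0..1} (\<lambda>x. v x t * uxx x t)"
    using v_x ux_x continuous_sections t v_boundary by (intro integral_by_parts_x) auto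
  moreover have "integral {0..1} (\<lambda>x. uxt x t * uxt x t) = - integral {0..1} (\<lambda>x. v x t * uxxt x t)"
    using v_x uxt_x continuous_sections t v_boundary by (intro integral_by_parts_x) auto
  ultimately show ?thesis
    unfolding Nvx_def friction_def using continuous_sections[OF t]
    by (simp add: integral_add integral_diff integrable_continuous_real continuous_intros
        power2_eq_square algebra_simps)
qed

lemma virial_has_derivative:
  "((\<lambda>t. cross t + \<epsilon> / 2 * Nux t) has_real_derivative
      Nv t - Nux t + integral {0..1} (\<lambda>x. u x t * F (u x t))
      - integral {0..1} (\<lambda>x. u x t * friction x t)) (at t within {t0..})"
proof -
  have "((\<lambda>t. cross t + \<epsilon> / 2 * Nux t) has_real_derivative
      integral {0..1} (\<lambda>x. (v x t)\<^sup>2 + u x t * utt x t)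
      + \<epsilon> / 2 * integral {0..1} (\<lambda>x. 2 * ux x t * uxt x t)) (at t within {t0..})"
    by (intro DERIV_add DERIV_cmult has_derivative_cross has_derivative_Nux)
  moreover have "integral {0..1} (\<lambda>x. ux x t * ux x t) = - integral {0..1} (\<lambda>x. u x t * uxx x t)"
    using u_x ux_x continuous_sections t boundary by (intro integral_by_parts_x) auto
  moreover have "integral {0..1} (\<lambda>x. ux x t * uxt x t) = - integral {0..1} (\<lambda>x. u x t * uxxt x t)"
    using u_x uxt_x continuous_sections t boundary by (intro integral_by_parts_x) auto
  ultimately show ?thesis
    unfolding Nv_def Nux_def friction_def using continuous_sections[OF t]
    by (simp add: integral_add integral_diff integrable_continuous_real continuous_intros
        power2_eq_square algebra_simps)
qed

lemma Nw_has_derivative: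
  "(Nw has_real_derivative
      - 2 * Nw t / \<epsilon> + 2 * integral {0..1} (\<lambda>x. w x t * (friction x t - v x t / \<epsilon> - F (u x t))))
     (at t within {t0..})"
proof -
  have "2 * w x t * (\<epsilon> * uxxt x t - utt x t)
      = 2 * (w x t * (friction x t - v x t / \<epsilon> - F (u x t))) - 2 / \<epsilon> * (w x t)\<^sup>2" for x
  proof -
    have "\<epsilon> * uxxt x t - utt x t = friction x t - (w x t + v x t) / \<epsilon> - F (u x t)"
      using eps_pos by (simp add: friction_def w_def field_simps)
    then have "2 * w x t * (\<epsilon> * uxxt x t - utt x t)
        = 2 * w x t * (friction x t - (w x t + v x t) / \<epsilon> - F (u x t))"
      by (simp only:)
    also have "\<dots> = 2 * (w x t * (friction x t - v x t / \<epsilon> - F (u x t))) - 2 / \<epsilon> * (w x t)\<^sup>2"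
      by (simp add: add_divide_distrib power2_eq_square algebra_simps)
    finally show ?thesis .
  qed
  then have "integral {0..1} (\<lambda>x. 2 * w x t * (\<epsilon> * uxxt x t - utt x t))
      = 2 * integral {0..1} (\<lambda>x. w x t * (friction x t - v x t / \<epsilon> - F (u x t))) - 2 / \<epsilon> * Nw t"
    unfolding Nw_def using continuous_all_sections[OF t] eps_pos
    by (simp add: integral_diff integrable_continuous_real continuous_intros)
  then show ?thesis
    using has_derivative_Nw by simp
qed

end

lemma energy_inequalities_hold:
  assumes "decay_parameters \<mu> \<epsilon> K a0 A deriv_bound \<alpha>" "0 < c" "c < pi" "\<mu> = c\<^sup>2"
    and "Nu t0 + Nux t0 + Nv t0 + Nuxx t0 \<le> \<alpha>\<^sup>2"
  shows "energy_inequalities \<mu> \<epsilon> K a0 A deriv_bound \<alpha> t0 Nu Nux Nv Nvx Nuxx Nw potential cross"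
proof (intro energy_inequalities.intro energy_inequalities_axioms.intro assms(1))
  show "\<And>t. t0 \<le> t \<Longrightarrow> 0 \<le> Nu t" "\<And>t. t0 \<le> t \<Longrightarrow> 0 \<le> Nv t"
    "\<And>t. t0 \<le> t \<Longrightarrow> 0 \<le> Nuxx t" "\<And>t. t0 \<le> t \<Longrightarrow> 0 \<le> Nw t"
    by (fact Nu_nonneg Nv_nonneg Nuxx_nonneg Nw_nonneg)+
  show "\<And>t. t0 \<le> t \<Longrightarrow> \<mu> * Nu t \<le> Nux t" "\<And>t. t0 \<le> t \<Longrightarrow> \<mu> * Nv t \<le> Nvx t"
    using poincare_u poincare_v assms by auto
  show "\<And>t. t0 \<le> t \<Longrightarrow> potential t \<le> K * Nu t / 2"
    "\<And>t r. t0 \<le> t \<Longrightarrow> 0 \<le> r \<Longrightarrow> Nu t + Nux t \<le> r\<^sup>2 \<Longrightarrow> \<bar>potential t\<bar> \<le> deriv_bound r * Nu t"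
    "\<And>t. t0 \<le> t \<Longrightarrow> \<bar>cross t\<bar> \<le> (Nu t + Nv t) / 2"
    "\<And>t. t0 \<le> t \<Longrightarrow> Nuxx t \<le> 2 * (Nw t + Nv t) / \<epsilon>\<^sup>2"
    "\<And>t. t0 \<le> t \<Longrightarrow> Nw t \<le> 2 * \<epsilon>\<^sup>2 * Nuxx t + 2 * Nv t"
    by (fact potential_le abs_potential_le abs_cross_le Nuxx_le Nw_le)+
  show "\<exists>d. ((\<lambda>t. Nv t / 2 + Nux t / 2 - potential t) has_real_derivative d) (at t) \<and>
      d \<le> - \<epsilon> * Nvx t - a0 * Nv t" if "t0 < t" for t
    using has_real_derivative_at_of_within_Ici[OF energy_has_derivative that] friction_work_ge[OF that]
      that by (intro exI conjI) auto
  show "\<exists>d. ((\<lambda>t. cross t + \<epsilon> / 2 * Nux t) has_real_derivative d) (at t) \<and>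
      (\<forall>\<eta>>0. d \<le> Nv t - Nux t + K * Nu t
         + A (sqrt (Nu t + Nux t + Nv t)) * (\<eta> * Nu t / 2 + Nv t / (2 * \<eta>)))" if "t0 < t" for t
  proof (intro exI conjI allI impI)
    show "((\<lambda>t. cross t + \<epsilon> / 2 * Nux t) has_real_derivative Nv t - Nux t
        + integral {0..1} (\<lambda>x. u x t * F (u x t)) - integral {0..1} (\<lambda>x. u x t * friction x t)) (at t)"
      using has_real_derivative_at_of_within_Ici[OF virial_has_derivative that] that by simp
    fix \<eta> :: real assume "0 < \<eta>"
    then show "Nv t - Nux t + integral {0..1} (\<lambda>x. u x t * F (u x t))
        - integral {0..1} (\<lambda>x. u x t * friction x t) \<le> Nv t - Nux t + K * Nu t
        + A (sqrt (Nu t + Nux t + Nv t)) * (\<eta> * Nu t / 2 + Nv t / (2 * \<eta>))"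
      using u_F_le[of t] abs_u_friction_le[OF that, of \<eta>] that by (simp add: abs_le_iff)
  qed
  show "\<exists>d. (Nw has_real_derivative d) (at t) \<and>
      (\<forall>r\<ge>0. Nu t + Nux t \<le> r\<^sup>2 \<longrightarrow> d \<le> - Nw t / \<epsilon>
         + 3 * \<epsilon> * ((A (sqrt (Nu t + Nux t + Nv t)))\<^sup>2 * Nv t + Nv t / \<epsilon>\<^sup>2 + (deriv_bound r)\<^sup>2 * Nu t))"
    if "t0 < t" for t
  proof (intro exI conjI allI impI)
    show "(Nw has_real_derivative - 2 * Nw t / \<epsilon>
        + 2 * integral {0..1} (\<lambda>x. w x t * (friction x t - v x t / \<epsilon> - F (u x t)))) (at t)"
      using has_real_derivative_at_of_within_Ici[OF Nw_has_derivative that] that by simp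
    fix r :: real assume "0 \<le> r" "Nu t + Nux t \<le> r\<^sup>2"
    from w_forcing_le[OF that this]
    show "- 2 * Nw t / \<epsilon> + 2 * integral {0..1} (\<lambda>x. w x t * (friction x t - v x t / \<epsilon> - F (u x t)))
        \<le> - Nw t / \<epsilon> + 3 * \<epsilon> * ((A (sqrt (Nu t + Nux t + Nv t)))\<^sup>2 * Nv t + Nv t / \<epsilon>\<^sup>2
          + (deriv_bound r)\<^sup>2 * Nu t)"
      by (simp add: field_simps)
  qed
  show "continuous_on {t0..} (\<lambda>t. Nv t / 2 + Nux t / 2 - potential t)"
    "continuous_on {t0..} (\<lambda>t. cross t + \<epsilon> / 2 * Nux t)" "continuous_on {t0..} Nw"
    using energy_has_derivative virial_has_derivative Nw_has_derivative
    by (auto intro!: DERIV_continuous_on)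
qed (use assms in auto)

lemma dist_d_decay:
  assumes "decay_parameters \<mu> \<epsilon> K a0 A deriv_bound \<alpha>" "0 < c" "c < pi" "\<mu> = c\<^sup>2"
    and initial: "dist_d (\<lambda>x. u x t0) (\<lambda>x. v x t0) \<le> \<alpha>" and "t \<ge> t0"
  shows "dist_d (\<lambda>x. u x t) (\<lambda>x. v x t)
    \<le> sqrt (decay_parameters.C_total \<mu> \<epsilon> K a0 A deriv_bound \<alpha>)
       * exp (- (decay_parameters.\<beta> \<mu> \<epsilon> K a0 A deriv_bound \<alpha> / 2) * (t - t0))
       * dist_d (\<lambda>x. u x t0) (\<lambda>x. v x t0)"
proof -
  have "Nu t0 + Nux t0 + Nv t0 + Nuxx t0 \<le> \<alpha>\<^sup>2"
    using initial dist_d_section[of t0] Nu_nonneg[of t0] Nux_nonneg[of t0] Nv_nonneg[of t0]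
      Nuxx_nonneg[of t0] real_sqrt_le_iff[of _ "\<alpha>\<^sup>2"] decay_parameters.alpha_pos[OF assms(1)]
    by simp
  then interpret energy_inequalities \<mu> \<epsilon> K a0 A deriv_bound \<alpha> t0 Nu Nux Nv Nvx Nuxx Nw potential cross
    by (rule energy_inequalities_hold[OF assms(1-4)])
  show ?thesis
    using sqrt_total_decay[OF \<open>t \<ge> t0\<close>] dist_d_section \<open>t \<ge> t0\<close> by simp
qed

end

lemma solution_of_is_solution:
  assumes "is_solution \<epsilon> F a t0 u v" "nonlinearity F F' K" "0 < \<epsilon>" "0 \<le> t0"
    and "\<And>x t p q r s. x \<in> {0<..<1} \<Longrightarrow> t \<ge> 0 \<Longrightarrow> a0 \<le> a x t p q r s"
    and "\<And>x t \<phi> \<psi>. x \<in> {0<..<1} \<Longrightarrow> t \<ge> 0 \<Longrightarrow> (\<phi>, \<psi>) \<in> Gamma \<Longrightarrow>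
       \<bar>a x t (\<phi> x) (deriv \<phi> x) (deriv (deriv \<phi>) x) (\<psi> x)\<bar> \<le> A (dist_d1 \<phi> \<psi>)"
    and "\<And>r. r \<ge> 0 \<Longrightarrow> A r \<ge> 0"
  obtains ux uxx uxt uxxt utt where "solution F F' K \<epsilon> a A a0 t0 u v ux uxx uxt uxxt utt"
  using assms(1) unfolding is_solution_def
proof (elim exE conjE)
  fix ux uxx uxt uxxt utt
  assume sol: "\<forall>x\<in>{0..1}. \<forall>t\<in>{t0..}.
        ((\<lambda>y. u y t) has_real_derivative ux x t) (at x within {0..1}) \<and>
        ((\<lambda>y. ux y t) has_real_derivative uxx x t) (at x within {0..1}) \<and>
        ((\<lambda>s. u x s) has_real_derivative v x t) (at t within {t0..}) \<and>
        ((\<lambda>y. v y t) has_real_derivative uxt x t) (at x within {0..1}) \<and>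
        ((\<lambda>y. uxt y t) has_real_derivative uxxt x t) (at x within {0..1}) \<and>
        ((\<lambda>s. v x s) has_real_derivative utt x t) (at t within {t0..})"
    and "continuous_on ({0..1} \<times> {t0..}) (\<lambda>(x, t). u x t)"
    "continuous_on ({0..1} \<times> {t0..}) (\<lambda>(x, t). ux x t)"
    "continuous_on ({0..1} \<times> {t0..}) (\<lambda>(x, t). uxx x t)"
    "continuous_on ({0..1} \<times> {t0..}) (\<lambda>(x, t). v x t)"
    "continuous_on ({0..1} \<times> {t0..}) (\<lambda>(x, t). uxt x t)"
    "continuous_on ({0..1} \<times> {t0..}) (\<lambda>(x, t). uxxt x t)"
    "continuous_on ({0..1} \<times> {t0..}) (\<lambda>(x, t). utt x t)"
    and "\<forall>x\<in>{0<..<1}. \<forall>t\<in>{t0<..}.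
        - \<epsilon> * uxxt x t + utt x t - uxx x t = F (u x t) - a x t (u x t) (ux x t) (uxx x t) (v x t) * v x t"
    and "\<forall>t\<in>{t0..}. u 0 t = 0 \<and> u 1 t = 0"
  then have "solution F F' K \<epsilon> a A a0 t0 u v ux uxx uxt uxxt utt"
    using assms by (intro solution.intro solution_axioms.intro) auto
  then show thesis by (rule that)
qed

lemma poincare_constant_choice:
  assumes "0 < K" "K < pi\<^sup>2" "- \<epsilon> * pi\<^sup>2 < a0" "0 < \<epsilon>"
  obtains c where "0 < c" "c < pi" "K < c\<^sup>2" "0 < \<epsilon> * c\<^sup>2 + a0"
proof -
  define m where "m = max K (- a0 / \<epsilon>)"
  have m: "m < pi\<^sup>2"
    using assms by (simp add: m_def field_simps)
  define c where "c = sqrt ((pi\<^sup>2 + m) / 2)"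
  have pos: "0 < pi\<^sup>2 + m"
    using assms(1) by (simp add: m_def add_pos_pos)
  then have c2: "c\<^sup>2 = (pi\<^sup>2 + m) / 2"
    by (simp add: c_def)
  show ?thesis
  proof
    show "0 < c"
      using pos by (simp add: c_def)
    have "K \<le> m" "- a0 / \<epsilon> \<le> m"
      by (simp_all add: m_def)
    then show "K < c\<^sup>2"
      using c2 m by auto
    have "(pi\<^sup>2 + m) / 2 < pi\<^sup>2"
      using m by auto
    then have "c < sqrt (pi\<^sup>2)"
      unfolding c_def by (rule real_sqrt_less_mono)
    then show "c < pi"
      by simp
    have "- a0 / \<epsilon> < c\<^sup>2"
      using c2 m \<open>- a0 / \<epsilon> \<le> m\<close> by auto
    then show "0 < \<epsilon> * c\<^sup>2 + a0"
      using assms(4) by (simp add: field_simps)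
  qed
qed

lemma exp_stable_in_large_intro:
  assumes "\<And>\<alpha>. \<alpha> > 0 \<Longrightarrow> \<exists>D C. D > 0 \<and> C > 0 \<and> (\<forall>t0 u v t. 0 \<le> t0 \<and> is_solution \<epsilon> F a t0 u v
        \<and> dist_d (\<lambda>x. u x t0) (\<lambda>x. v x t0) \<le> \<alpha> \<and> t \<ge> t0 \<longrightarrow> dist_d (\<lambda>x. u x t) (\<lambda>x. v x t)
          \<le> D * exp (- C * (t - t0)) * dist_d (\<lambda>x. u x t0) (\<lambda>x. v x t0))"
  shows "exp_stable_in_large \<epsilon> F a"
  unfolding exp_stable_in_large_def
proof (intro allI impI)
  fix \<alpha> :: real assume "\<alpha> > 0"
  then obtain D C where "D > 0" "C > 0" and decay: "\<forall>t0 u v t. 0 \<le> t0 \<and> is_solution \<epsilon> F a t0 u v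
      \<and> dist_d (\<lambda>x. u x t0) (\<lambda>x. v x t0) \<le> \<alpha> \<and> t \<ge> t0 \<longrightarrow> dist_d (\<lambda>x. u x t) (\<lambda>x. v x t)
        \<le> D * exp (- C * (t - t0)) * dist_d (\<lambda>x. u x t0) (\<lambda>x. v x t0)"
    using assms by blast
  show "\<exists>D C. D > 0 \<and> C > 0 \<and> (\<forall>t0\<ge>0. \<forall>u0 u1 u v.
      (u0, u1) \<in> Gamma \<and> dist_d u0 u1 \<le> \<alpha> \<and> is_solution \<epsilon> F a t0 u v \<and>
      (\<forall>x\<in>{0..1}. u x t0 = u0 x \<and> v x t0 = u1 x) \<longrightarrow>
      (\<forall>t\<ge>t0. dist_d (\<lambda>x. u x t) (\<lambda>x. v x t) \<le> D * exp (- C * (t - t0)) * dist_d u0 u1))"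
  proof (rule exI[of _ D], rule exI[of _ C], intro conjI allI impI)
    fix t0 u0 u1 u v t
    assume "t0 \<ge> 0" and data: "(u0, u1) \<in> Gamma \<and> dist_d u0 u1 \<le> \<alpha> \<and>
      is_solution \<epsilon> F a t0 u v \<and> (\<forall>x\<in>{0..1}. u x t0 = u0 x \<and> v x t0 = u1 x)" and "t \<ge> t0"
    have "dist_d u0 u1 = dist_d (\<lambda>x. u x t0) (\<lambda>x. v x t0)"
      using data by (intro dist_d_cong) auto
    then show "dist_d (\<lambda>x. u x t) (\<lambda>x. v x t) \<le> D * exp (- C * (t - t0)) * dist_d u0 u1"
      using decay \<open>t0 \<ge> 0\<close> \<open>t \<ge> t0\<close> data by auto
  qed (fact \<open>D > 0\<close> \<open>C > 0\<close>)+
qed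

theorem theorem3:
  fixes \<epsilon> K :: real and F :: "real \<Rightarrow> real"
    and a :: "real \<Rightarrow> real \<Rightarrow> real \<Rightarrow> real \<Rightarrow> real \<Rightarrow> real \<Rightarrow> real"
    and A :: "real \<Rightarrow> real"
  assumes eps: "\<epsilon> > 0"
    and F_C1: "\<forall>s. F differentiable (at s)" "continuous_on UNIV (deriv F)"
    and a_cont: "continuous_on ({0<..<1} \<times> {0..} \<times> UNIV \<times> UNIV \<times> UNIV \<times> UNIV)
                   (\<lambda>(x, t, p, q, r, s). a x t p q r s)"
    and F0: "F 0 = 0"
    and K: "K > 0" "K < 3 * pi\<^sup>2 / 4" "\<forall>s. deriv F s \<le> K"
    and a_inf: "bdd_below ((\<lambda>(x, t, p, q, r, s). a x t p q r s) `
                   ({0<..<1} \<times> {0..} \<times> UNIV \<times> UNIV \<times> UNIV \<times> UNIV))"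
      "(INF (x, t, p, q, r, s) \<in> {0<..<1} \<times> {0..} \<times> UNIV \<times> UNIV \<times> UNIV \<times> UNIV.
          a x t p q r s) > - \<epsilon> * pi\<^sup>2"
    and A_mono: "mono_on {0..} A" and A_nonneg: "\<forall>r\<ge>0. A r \<ge> 0"
    and a_bound: "\<forall>x\<in>{0<..<1}. \<forall>t\<ge>0. \<forall>(\<phi>, \<psi>)\<in>Gamma.
          \<bar>a x t (\<phi> x) (deriv \<phi> x) (deriv (deriv \<phi>) x) (\<psi> x)\<bar> \<le> A (dist_d1 \<phi> \<psi>)"
  shows "exp_stable_in_large \<epsilon> F a"
proof -
  \<comment> \<open>The continuity of \<open>a\<close> matters only for the existence of solutions, which is not at issue
    here, and of the bound on \<open>K\<close> only \<open>K < \<pi>\<^sup>2\<close> is used.\<close>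
  define a0 where "a0 = (INF (x, t, p, q, r, s) \<in> {0<..<1} \<times> {0..} \<times> UNIV \<times> UNIV \<times> UNIV \<times> UNIV.
    a x t p q r s)"
  have a_ge: "a0 \<le> a x t p q r s" if "x \<in> {0<..<1}" "t \<ge> 0" for x t p q r s
    using cINF_lower[OF a_inf(1), of "(x, t, p, q, r, s)"] that by (simp add: a0_def)
  have bound: "\<And>x t \<phi> \<psi>. x \<in> {0<..<1} \<Longrightarrow> t \<ge> 0 \<Longrightarrow> (\<phi>, \<psi>) \<in> Gamma \<Longrightarrow>
      \<bar>a x t (\<phi> x) (deriv \<phi> x) (deriv (deriv \<phi>) x) (\<psi> x)\<bar> \<le> A (dist_d1 \<phi> \<psi>)"
    using a_bound by fastforce
  have F: "nonlinearity F (deriv F) K"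
    using F_C1 F0 K(3) by unfold_locales (auto simp: DERIV_deriv_iff_real_differentiable)
  obtain c where c: "0 < c" "c < pi" "K < c\<^sup>2" "0 < \<epsilon> * c\<^sup>2 + a0"
    using poincare_constant_choice[of K \<epsilon> a0] K(1,2) a_inf(2) eps by (auto simp: a0_def)
  show ?thesis
  proof (rule exp_stable_in_large_intro)
    fix \<alpha> :: real assume "\<alpha> > 0"
    then interpret decay_parameters "c\<^sup>2" \<epsilon> K a0 A "nonlinearity.deriv_bound (deriv F)" \<alpha>
      using eps K(1) c A_mono A_nonneg nonlinearity.deriv_bound_nonneg[OF F] by unfold_locales auto
    have decay: "dist_d (\<lambda>x. u x t) (\<lambda>x. v x t)
        \<le> sqrt C_total * exp (- (\<beta> / 2) * (t - t0)) * dist_d (\<lambda>x. u x t0) (\<lambda>x. v x t0)"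
      if t0: "0 \<le> t0" and sol: "is_solution \<epsilon> F a t0 u v"
        and initial: "dist_d (\<lambda>x. u x t0) (\<lambda>x. v x t0) \<le> \<alpha>" and t: "t \<ge> t0" for t0 u v t
    proof -
      obtain ux uxx uxt uxxt utt where "solution F (deriv F) K \<epsilon> a A a0 t0 u v ux uxx uxt uxxt utt"
        using solution_of_is_solution[OF sol F eps t0 a_ge bound] A_nonneg by blast
      then show ?thesis
        using solution.dist_d_decay[OF _ decay_parameters_axioms c(1,2)] initial t by blast
    qed
    show "\<exists>D C. D > 0 \<and> C > 0 \<and> (\<forall>t0 u v t. 0 \<le> t0 \<and> is_solution \<epsilon> F a t0 u v
        \<and> dist_d (\<lambda>x. u x t0) (\<lambda>x. v x t0) \<le> \<alpha> \<and> t \<ge> t0 \<longrightarrow> dist_d (\<lambda>x. u x t) (\<lambda>x. v x t)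
          \<le> D * exp (- C * (t - t0)) * dist_d (\<lambda>x. u x t0) (\<lambda>x. v x t0))"
      by (rule exI[of _ "sqrt C_total"], rule exI[of _ "\<beta> / 2"]) (use C_total_pos beta_pos decay in auto)
  qed
qed

end
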